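(* Let $X$ be a sofic shift and let $\varphi$ be a flip for $(X,\sigma_X)$. Then the generating function $$G_{\sigma_X,\varphi}(t)=\sum_{m=1}^\infty\left(p_{2m-1,0}(\sigma_X,\varphi)\,t^{2m-1}+\frac{p_{2m,0}(\sigma_X,\varphi)+p_{2m,1}(\sigma_X,\varphi)}{2}\,t^{2m}\right)$$ of $(X,\sigma_X,\varphi)$ is a rational function.
   Context: For a shift space $X$ (over a finite alphabet), $\sigma_X$ denotes the shift map. A flip for $(X,\sigma_X)$ is a homeomorphism $\varphi:X\to X$ with $\varphi\sigma_X=\sigma_X^{-1}\varphi$ and $\varphi^2=\mathrm{id}_X$. For a positive integer $m$ and an integer $n$, $p_{m,n}(\sigma_X,\varphi)=|\{x\in X:\sigma_X^m(x)=\sigma_X^n\varphi(x)=x\}|$. *)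

theory Defs
  imports "HOL-Analysis.Analysis" "HOL-Computational_Algebra.Polynomial_FPS"
begin

definition shift_pow :: "int \<Rightarrow> (int \<Rightarrow> 'a) \<Rightarrow> (int \<Rightarrow> 'a)" where
  "shift_pow n x = (\<lambda>i. x (i + n))"

definition shift_map :: "(int \<Rightarrow> 'a) \<Rightarrow> (int \<Rightarrow> 'a)" where
  "shift_map x = (\<lambda>i. x (i + 1))"

definition full_shift_topology :: "(int \<Rightarrow> 'a) topology" where
  "full_shift_topology = product_topology (\<lambda>_. discrete_topology (UNIV :: 'a set)) UNIV"

text \<open>Sofic shift (Lind--Marcus): the set of label sequences of bi-infinite paths
  in a finite labelled graph.\<close>
definition sofic_shift :: "(int \<Rightarrow> 'a::finite) set \<Rightarrow> bool" where
  "sofic_shift X \<longleftrightarrow> (\<exists>(E::nat set) (src::nat \<Rightarrow> nat) (tgt::nat \<Rightarrow> nat) (lab::nat \<Rightarrow> 'a).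
      finite E \<and>
      X = {x. \<exists>\<xi>::int \<Rightarrow> nat. (\<forall>i. \<xi> i \<in> E \<and> tgt (\<xi> i) = src (\<xi> (i + 1))) \<and>
                              (\<forall>i. x i = lab (\<xi> i))})"

definition is_flip :: "(int \<Rightarrow> 'a) set \<Rightarrow> ((int \<Rightarrow> 'a) \<Rightarrow> (int \<Rightarrow> 'a)) \<Rightarrow> bool" where
  "is_flip X \<phi> \<longleftrightarrow>
     homeomorphic_map (subtopology full_shift_topology X) (subtopology full_shift_topology X) \<phi> \<and>
     (\<forall>x\<in>X. \<phi> (shift_map x) = shift_pow (-1) (\<phi> x)) \<and>
     (\<forall>x\<in>X. \<phi> (\<phi> x) = x)"

definition p_count :: "(int \<Rightarrow> 'a) set \<Rightarrow> ((int \<Rightarrow> 'a) \<Rightarrow> (int \<Rightarrow> 'a)) \<Rightarrow> nat \<Rightarrow> int \<Rightarrow> nat" where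
  "p_count X \<phi> m n = card {x\<in>X. (shift_map ^^ m) x = x \<and> shift_pow n (\<phi> x) = x}"

definition flip_gen_fun :: "(int \<Rightarrow> 'a) set \<Rightarrow> ((int \<Rightarrow> 'a) \<Rightarrow> (int \<Rightarrow> 'a)) \<Rightarrow> real fps" where
  "flip_gen_fun X \<phi> = Abs_fps (\<lambda>k. if k = 0 then 0
       else if odd k then real (p_count X \<phi> k 0)
       else (real (p_count X \<phi> k 0) + real (p_count X \<phi> k 1)) / 2)"

definition rational_fps :: "real fps \<Rightarrow> bool" where
  "rational_fps F \<longleftrightarrow> (\<exists>P Q :: real poly. Q \<noteq> 0 \<and> fps_of_poly Q * F = fps_of_poly P)"

end

(*
  By continuity and compactness the flip has a local rule: for some radius r, the coordinate
  (\<phi> x) 0 is a function of x on [-r, r], and then \<phi> x (-i) is the same function of x on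
  [i - r, i + r] because \<phi> reverses the shift. A point x with \<sigma>^m x = x and \<sigma>^n \<phi> x = x
  therefore satisfies x (-i - n) = \<phi> x (-i), a function of x near i, and is determined by its
  folded word of length N (about m/2 + 2r) whose p-th letter is the pair
  (x (p - r), x (-(p - r) - n)): the first components run through one half of a period, the second
  components through the other half backwards. A word arises in this way iff its windows of
  length 2r + 1 obey the local rule, its two ends fit together, and the period it spells labels a
  cycle of a graph presenting X. Each condition is decided by a finite automaton reading the word,
  so the number of such words of length N satisfies a linear recurrence in N. Taking m = 2k + 1
  or m = 2k, the sequences p_{2k+1,0}, p_{2k,0} and p_{2k,1} are linearly recurrent, and the
  generating function, which interleaves them, is rational.
*)

theory Submission
  imports Defs
begin

section \<open>Linear recurrences and rational power series\<close>

definition linear_recurrent :: "(nat \<Rightarrow> real) \<Rightarrow> bool" where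
  "linear_recurrent c \<longleftrightarrow>
     (\<exists>M (q :: nat \<Rightarrow> real) K. (\<exists>j\<le>M. q j \<noteq> 0) \<and> (\<forall>k\<ge>K. (\<Sum>j\<le>M. q j * c (k + j)) = 0))"

lemma coeff_reflected_sum_monom:
  "coeff (\<Sum>j\<le>M. monom (q j) (M - j)) i = (if i \<le> M then q (M - i) else (0::real))"
proof -
  have "coeff (\<Sum>j\<le>M. monom (q j) (M - j)) i = (\<Sum>j\<le>M. if M - j = i then q j else 0)"
    by (simp add: coeff_sum coeff_monom)
  also have "\<dots> = (if i \<le> M then q (M - i) else 0)"
  proof (cases "i \<le> M")
    case True
    have "(\<Sum>j\<le>M. if M - j = i then q j else 0) = (\<Sum>j\<le>M. if j = M - i then q j else 0)"
      by (intro sum.cong) (use True in auto)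
    then show ?thesis using True by simp
  next
    case False
    then show ?thesis by (intro trans[OF sum.neutral]) auto
  qed
  finally show ?thesis .
qed

lemma fps_of_poly_if_eventually_zero:
  fixes F :: "real fps"
  assumes "\<And>n. n \<ge> N \<Longrightarrow> fps_nth F n = 0"
  shows "\<exists>P. F = fps_of_poly P"
proof -
  have "F = fps_cutoff N F" using assms by (auto simp: fps_eq_iff not_less)
  then show ?thesis by (metis fps_of_poly_truncate)
qed

lemma linear_recurrent_imp_rational_fps:
  assumes "linear_recurrent c" shows "rational_fps (Abs_fps c)"
proof -
  obtain M q K where nz: "\<exists>j\<le>M. q j \<noteq> 0"
    and rec: "\<And>k. k \<ge> K \<Longrightarrow> (\<Sum>j\<le>M. q j * c (k + j)) = 0"
    using assms unfolding linear_recurrent_def by blast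
  define Q where "Q = (\<Sum>j\<le>M. monom (q j) (M - j))"
  have cQ: "coeff Q i = (if i \<le> M then q (M - i) else 0)" for i
    unfolding Q_def by (rule coeff_reflected_sum_monom)
  obtain j0 where j0: "j0 \<le> M" "q j0 \<noteq> 0" using nz by blast
  have "coeff Q (M - j0) \<noteq> 0" using cQ j0 by simp
  then have Qnz: "Q \<noteq> 0" by auto
  have z: "fps_nth (fps_of_poly Q * Abs_fps c) n = 0" if "n \<ge> M + K" for n
  proof -
    have "fps_nth (fps_of_poly Q * Abs_fps c) n = (\<Sum>i=0..n. coeff Q i * c (n - i))"
      by (simp add: fps_mult_nth)
    also have "\<dots> = (\<Sum>i=0..M. coeff Q i * c (n - i))"
      using that by (intro sum.mono_neutral_right) (auto simp: cQ)
    also have "\<dots> = (\<Sum>i=0..M. q (M - i) * c (n - i))"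
      by (intro sum.cong) (auto simp: cQ)
    also have "\<dots> = (\<Sum>j\<le>M. q j * c ((n - M) + j))"
    proof (rule sum.reindex_bij_witness[where i="\<lambda>j. M - j" and j="\<lambda>i. M - i"])
    qed (use that in auto)
    also have "\<dots> = 0" using rec[of "n - M"] that by simp
    finally show ?thesis .
  qed
  obtain P where "fps_of_poly Q * Abs_fps c = fps_of_poly P"
    using fps_of_poly_if_eventually_zero[OF z] by blast
  then show ?thesis unfolding rational_fps_def using Qnz by blast
qed

lemma rational_fps_add:
  assumes "rational_fps A" "rational_fps B" shows "rational_fps (A + B)"
proof -
  obtain P1 Q1 where 1: "Q1 \<noteq> 0" "fps_of_poly Q1 * A = fps_of_poly P1" using assms(1) rational_fps_def by blast
  obtain P2 Q2 where 2: "Q2 \<noteq> 0" "fps_of_poly Q2 * B = fps_of_poly P2" using assms(2) rational_fps_def by blast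
  have "fps_of_poly (Q1 * Q2) * (A + B) = fps_of_poly (Q2 * P1 + Q1 * P2)"
    by (simp add: fps_of_poly_mult fps_of_poly_add algebra_simps 1(2)[symmetric] 2(2)[symmetric])
  moreover have "Q1 * Q2 \<noteq> 0" using 1 2 by simp
  ultimately show ?thesis unfolding rational_fps_def by blast
qed

lemma linear_recurrent_eventually_eq:
  assumes "linear_recurrent c" "\<And>k. k \<ge> K0 \<Longrightarrow> d k = c k" shows "linear_recurrent d"
proof -
  obtain M q K where nz: "\<exists>j\<le>M. q j \<noteq> 0"
    and rec: "\<And>k. k \<ge> K \<Longrightarrow> (\<Sum>j\<le>M. q j * c (k + j)) = 0"
    using assms unfolding linear_recurrent_def by blast
  have "\<forall>k\<ge>max K K0. (\<Sum>j\<le>M. q j * d (k+j)) = 0"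
    using rec assms(2) by auto
  then show ?thesis unfolding linear_recurrent_def using nz by blast
qed

lemma linear_recurrent_shift:
  assumes "linear_recurrent c" shows "linear_recurrent (\<lambda>k. c (k + C))"
proof -
  obtain M q K where nz: "\<exists>j\<le>M. q j \<noteq> 0"
    and rec: "\<And>k. k \<ge> K \<Longrightarrow> (\<Sum>j\<le>M. q j * c (k + j)) = 0"
    using assms unfolding linear_recurrent_def by blast
  have "\<forall>k\<ge>K. (\<Sum>j\<le>M. q j * c (k + j + C)) = 0"
  proof (intro allI impI)
    fix k assume "k \<ge> K"
    then have "(\<Sum>j\<le>M. q j * c (k + C + j)) = 0" using rec by simp
    then show "(\<Sum>j\<le>M. q j * c (k + j + C)) = 0" by (simp add: add_ac)
  qed
  then show ?thesis unfolding linear_recurrent_def using nz by (auto simp: add_ac)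
qed

lemma linear_recurrent_scale:
  assumes "linear_recurrent c" shows "linear_recurrent (\<lambda>k. a * c k)"
proof -
  obtain M q K where nz: "\<exists>j\<le>M. q j \<noteq> 0"
    and rec: "\<And>k. k \<ge> K \<Longrightarrow> (\<Sum>j\<le>M. q j * c (k + j)) = 0"
    using assms unfolding linear_recurrent_def by blast
  have "\<forall>k\<ge>K. (\<Sum>j\<le>M. q j * (a * c (k + j))) = 0"
    using rec by (auto simp: sum_distrib_left[symmetric] mult_ac)
  then show ?thesis unfolding linear_recurrent_def using nz by blast
qed

lemma linear_recurrent_spread:
  assumes "linear_recurrent c" "e < 2"
  shows "linear_recurrent (\<lambda>k. if k mod 2 = e then c (k div 2) else 0)"
proof -
  obtain M q K where nz: "\<exists>j\<le>M. q j \<noteq> 0"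
    and rec: "\<And>k. k \<ge> K \<Longrightarrow> (\<Sum>j\<le>M. q j * c (k + j)) = 0"
    using assms unfolding linear_recurrent_def by blast
  define q' where "q' i = (if even i then q (i div 2) else 0)" for i
  have nz': "\<exists>j\<le>2*M. q' j \<noteq> 0" using nz unfolding q'_def
    by (metis div_mult_self1_is_m dvd_triv_left mult.commute mult_le_mono2 zero_less_numeral)
  have "(\<Sum>j\<le>2*M. q' j * (if (k+j) mod 2 = e then c ((k+j) div 2) else 0)) = 0" if k: "k \<ge> 2*K" for k
  proof -
    have "(\<Sum>j\<le>2*M. q' j * (if (k+j) mod 2 = e then c ((k+j) div 2) else 0))
        = (\<Sum>j\<in>(\<lambda>i. 2*i) ` {..M}. q' j * (if (k+j) mod 2 = e then c ((k+j) div 2) else 0))"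
      by (intro sum.mono_neutral_right) (auto simp: q'_def)
    also have "\<dots> = (\<Sum>i\<le>M. q i * (if (k + 2*i) mod 2 = e then c ((k + 2*i) div 2) else 0))"
      by (subst sum.reindex) (auto simp: inj_on_def q'_def)
    also have "\<dots> = (\<Sum>i\<le>M. q i * (if k mod 2 = e then c (k div 2 + i) else 0))"
      by (intro sum.cong) (auto simp: add_ac)
    also have "\<dots> = 0"
    proof (cases "k mod 2 = e")
      case True then show ?thesis using rec[of "k div 2"] k by (simp add: add_ac)
    qed simp
    finally show ?thesis .
  qed
  then show ?thesis unfolding linear_recurrent_def using nz' by blast
qed

section \<open>Word functions with finitely many residuals\<close>

text \<open>By Myhill--Nerode, for boolean \<open>g\<close> this says that \<open>{w. g w}\<close> is a regular language.\<close>
definition regular_fun :: "('b list \<Rightarrow> 'c) \<Rightarrow> bool" where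
  "regular_fun g \<longleftrightarrow> finite (range (\<lambda>u v. g (u @ v)))"

lemma nontrivial_linear_dependence:
  fixes v :: "'j \<Rightarrow> 'f \<Rightarrow> real"
  assumes "finite S" "finite J" "card J > card S"
  shows "\<exists>q. (\<exists>j\<in>J. q j \<noteq> 0) \<and> (\<forall>f\<in>S. (\<Sum>j\<in>J. q j * v j f) = 0)"
  using assms
proof (induction S arbitrary: J v rule: finite_induct)
  case empty
  then obtain j0 where "j0 \<in> J" by fastforce
  then show ?case by (intro exI[of _ "\<lambda>j. if j = j0 then 1 else 0"]) auto
next
  case (insert s S)
  show ?case
  proof (cases "\<forall>j\<in>J. v j s = 0")
    case True
    from insert.IH[of J v] insert.prems insert.hyps obtain q where
      q: "\<exists>j\<in>J. q j \<noteq> 0" "\<forall>f\<in>S. (\<Sum>j\<in>J. q j * v j f) = 0" by auto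
    then show ?thesis using True by (intro exI[of _ q]) auto
  next
    case False
    then obtain j0 where j0: "j0 \<in> J" "v j0 s \<noteq> 0" by auto
    define J' where "J' = J - {j0}"
    define w where "w j f = v j f - (v j s / v j0 s) * v j0 f" for j f
    have cJ': "card J' > card S" using insert.prems insert.hyps j0 unfolding J'_def by auto
    from insert.IH[of J' w] cJ' insert.prems obtain q' where
      q': "\<exists>j\<in>J'. q' j \<noteq> 0" "\<forall>f\<in>S. (\<Sum>j\<in>J'. q' j * w j f) = 0" unfolding J'_def by auto
    define q where "q j = (if j = j0 then - (\<Sum>i\<in>J'. q' i * v i s) / v j0 s else q' j)" for j
    have fJ: "finite J'" using insert.prems unfolding J'_def by auto
    have key: "(\<Sum>j\<in>J. q j * v j f) = (\<Sum>j\<in>J'. q' j * w j f)" for f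
    proof -
      have "J = insert j0 J'" "j0 \<notin> J'" using j0 unfolding J'_def by auto
      then have "(\<Sum>j\<in>J. q j * v j f) = q j0 * v j0 f + (\<Sum>j\<in>J'. q j * v j f)"
        using fJ by simp
      also have "(\<Sum>j\<in>J'. q j * v j f) = (\<Sum>j\<in>J'. q' j * v j f)"
        by (intro sum.cong) (auto simp: q_def J'_def)
      also have "(\<Sum>j\<in>J'. q' j * w j f) = (\<Sum>j\<in>J'. q' j * v j f) - (\<Sum>j\<in>J'. q' j * v j s) / v j0 s * v j0 f"
        by (simp add: w_def algebra_simps sum_subtractf sum_distrib_left sum_divide_distrib sum_distrib_right)
      ultimately show ?thesis by (simp add: q_def)
    qed
    have "(\<Sum>j\<in>J'. q' j * w j s) = 0" using j0 by (simp add: w_def)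
    then have "\<forall>f\<in>insert s S. (\<Sum>j\<in>J. q j * v j f) = 0" using key q'(2) by auto
    moreover have "\<exists>j\<in>J. q j \<noteq> 0" using q'(1) unfolding q_def J'_def by auto
    ultimately show ?thesis by blast
  qed
qed

definition count_words :: "('b list \<Rightarrow> bool) \<Rightarrow> nat \<Rightarrow> real" where
  "count_words f L = real (card {w. length w = L \<and> f w})"

lemma finite_lists_of_length: "finite {w :: 'b::finite list. length w = L \<and> P w}"
proof -
  have "finite {w :: 'b list. set w \<subseteq> UNIV \<and> length w = L}" by (rule finite_lists_length_eq) simp
  then show ?thesis by (rule finite_subset[rotated]) auto
qed

lemma count_words_Suc: "count_words f (Suc L) = (\<Sum>b\<in>(UNIV::'b::finite set). count_words (\<lambda>v. f (b # v)) L)"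
proof -
  have eq: "{w. length w = Suc L \<and> f w} = (\<Union>b. (Cons b) ` {w. length w = L \<and> f (b # w)})"
    by (auto simp: length_Suc_conv)
  have "card (\<Union>b. (Cons b) ` {w. length w = L \<and> f (b # w)})
      = (\<Sum>b\<in>UNIV. card ((Cons b) ` {w. length w = L \<and> f (b # w)}))"
    by (intro card_UN_disjoint) (auto intro: finite_lists_of_length)
  also have "\<dots> = (\<Sum>b\<in>UNIV. card {w. length w = L \<and> f (b # w)})"
    by (intro sum.cong refl card_image) auto
  finally show ?thesis unfolding count_words_def eq by simp
qed

lemma linear_recurrent_count_words:
  fixes g :: "'b::finite list \<Rightarrow> bool"
  assumes "regular_fun g"
  shows "linear_recurrent (\<lambda>L. real (card {w. length w = L \<and> g w}))"
proof -
  define S where "S = range (\<lambda>u v. g (u @ v))"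
  have fS: "finite S" using assms unfolding regular_fun_def S_def by simp
  have clos: "(\<lambda>v. f (b # v)) \<in> S" if "f \<in> S" for f b
  proof -
    from that obtain u where "f = (\<lambda>v. g (u @ v))" unfolding S_def by auto
    then have "(\<lambda>v. f (b # v)) = (\<lambda>v. g ((u @ [b]) @ v))" by simp
    then show ?thesis unfolding S_def by blast
  qed
  have gS: "g \<in> S" unfolding S_def by (rule range_eqI[of _ _ "[]"]) simp
  define M where "M = card S"
  txt \<open>A linear relation among the first \<open>M + 1\<close> word counts that holds simultaneously for all
    residuals propagates to all lengths, since the count for \<open>f\<close> at length \<open>L + 1\<close> is the
    sum of the counts for the residuals of \<open>f\<close> at length \<open>L\<close>.\<close>
  obtain q where q: "\<exists>j\<in>{..M}. q j \<noteq> 0" "\<forall>f\<in>S. (\<Sum>j\<in>{..M}. q j * count_words f j) = 0"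
    using nontrivial_linear_dependence[OF fS, of "{..M}" "\<lambda>j f. count_words f j"] unfolding M_def by auto
  have rec: "\<forall>f\<in>S. (\<Sum>j\<le>M. q j * count_words f (k + j)) = 0" for k
  proof (induction k)
    case 0 then show ?case using q(2) by simp
  next
    case (Suc k)
    show ?case
    proof
      fix f assume f: "f \<in> S"
      have "(\<Sum>j\<le>M. q j * count_words f (Suc k + j))
          = (\<Sum>j\<le>M. \<Sum>b\<in>UNIV. q j * count_words (\<lambda>v. f (b # v)) (k + j))"
        by (simp add: count_words_Suc sum_distrib_left)
      also have "\<dots> = (\<Sum>b\<in>UNIV. \<Sum>j\<le>M. q j * count_words (\<lambda>v. f (b # v)) (k + j))"
        by (rule sum.swap)
      also have "\<dots> = 0" using Suc clos f by simp
      finally show "(\<Sum>j\<le>M. q j * count_words f (Suc k + j)) = 0" .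
    qed
  qed
  have "\<forall>k\<ge>0. (\<Sum>j\<le>M. q j * real (card {w. length w = k + j \<and> g w})) = 0"
    using rec gS unfolding count_words_def by blast
  then show ?thesis unfolding linear_recurrent_def using q(1) by blast
qed

lemma regular_fun_comp: "regular_fun g \<Longrightarrow> regular_fun (\<lambda>w. h (g w))"
proof -
  assume "regular_fun g"
  then have "finite ((\<lambda>\<rho> v. h (\<rho> v)) ` range (\<lambda>u v. g (u @ v)))" unfolding regular_fun_def by simp
  moreover have "range (\<lambda>u v. h (g (u @ v))) = (\<lambda>\<rho> v. h (\<rho> v)) ` range (\<lambda>u v. g (u @ v))" by auto
  ultimately show ?thesis unfolding regular_fun_def by simp
qed

lemma regular_fun_pair: "regular_fun g1 \<Longrightarrow> regular_fun g2 \<Longrightarrow> regular_fun (\<lambda>w. (g1 w, g2 w))"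
proof -
  assume a: "regular_fun g1" "regular_fun g2"
  let ?R1 = "range (\<lambda>u v. g1 (u @ v))" and ?R2 = "range (\<lambda>u v. g2 (u @ v))"
  have "finite ((\<lambda>(a,b) v. (a v, b v)) ` (?R1 \<times> ?R2))" using a unfolding regular_fun_def by simp
  moreover have "range (\<lambda>u v. (g1 (u @ v), g2 (u @ v))) \<subseteq> (\<lambda>(a,b) v. (a v, b v)) ` (?R1 \<times> ?R2)" by auto
  ultimately show ?thesis unfolding regular_fun_def by (rule finite_subset[rotated])
qed

lemma regular_fun_hom:
  assumes "finite (range h)" "\<And>u v. h (u @ v) = f (h u) (h v)"
  shows "regular_fun h"
proof -
  have "range (\<lambda>u v. h (u @ v)) \<subseteq> (\<lambda>a v. f a (h v)) ` range h" using assms(2) by auto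
  moreover have "finite ((\<lambda>a v. f a (h v)) ` range h)" using assms(1) by simp
  ultimately show ?thesis unfolding regular_fun_def by (rule finite_subset)
qed

lemma regular_fun_take: "regular_fun (\<lambda>w::'b::finite list. take K w)"
proof -
  have "range (\<lambda>(u::'b list) v. take K (u @ v))
      \<subseteq> (\<lambda>t v. t @ take (K - length t) v) ` {xs :: 'b list. set xs \<subseteq> UNIV \<and> length xs \<le> K}"
  proof
    fix x :: "'b list \<Rightarrow> 'b list" assume "x \<in> range (\<lambda>u v. take K (u @ v))"
    then obtain u :: "'b list" where x: "x = (\<lambda>v. take K (u @ v))" by auto
    have "x = (\<lambda>v. take K u @ take (K - length (take K u)) v)"
      unfolding x by (auto simp: take_append min_def)
    then show "x \<in> (\<lambda>t v. t @ take (K - length t) v) ` {xs. set xs \<subseteq> UNIV \<and> length xs \<le> K}"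
      by (rule image_eqI[where x="take K u"]) simp
  qed
  then show ?thesis unfolding regular_fun_def
    by (rule finite_subset) (intro finite_imageI finite_lists_length_le, simp)
qed

lemma drop_suffix_append:
  "drop (length (u @ v) - K) (u @ v)
    = drop (length (drop (length u - K) u @ v) - K) (drop (length u - K) u @ v)"
proof (cases "length u \<le> K")
  case True then show ?thesis by simp
next
  case False
  have "drop (length (u @ v) - K) (u @ v) = drop (length v) (drop (length u - K) (u @ v))"
    using False by (simp add: add.commute)
  also have "drop (length u - K) (u @ v) = drop (length u - K) u @ v" by simp
  finally show ?thesis using False by simp
qed

lemma regular_fun_suffix: "regular_fun (\<lambda>w::'b::finite list. drop (length w - K) w)"
proof -
  have "range (\<lambda>(u::'b list) v. drop (length (u @ v) - K) (u @ v))
      \<subseteq> (\<lambda>t v. drop (length (t @ v) - K) (t @ v)) ` {xs :: 'b list. set xs \<subseteq> UNIV \<and> length xs \<le> K}"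
  proof
    fix x :: "'b list \<Rightarrow> 'b list" assume "x \<in> range (\<lambda>u v. drop (length (u @ v) - K) (u @ v))"
    then obtain u :: "'b list" where x: "x = (\<lambda>v. drop (length (u @ v) - K) (u @ v))" by auto
    have "x = (\<lambda>v. drop (length (drop (length u - K) u @ v) - K) (drop (length u - K) u @ v))"
      unfolding x by (rule ext, rule drop_suffix_append)
    then show "x \<in> (\<lambda>t v. drop (length (t @ v) - K) (t @ v)) ` {xs. set xs \<subseteq> UNIV \<and> length xs \<le> K}"
      by (rule image_eqI[where x="drop (length u - K) u"]) simp
  qed
  then show ?thesis unfolding regular_fun_def
    by (rule finite_subset) (intro finite_imageI finite_lists_length_le, simp)
qed

lemma regular_fun_drop: "regular_fun g \<Longrightarrow> regular_fun (\<lambda>w. g (drop R w))"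
proof -
  assume a: "regular_fun g"
  have "range (\<lambda>u v. g (drop R (u @ v))) \<subseteq> range (\<lambda>u v. g (u @ v)) \<union> (\<lambda>j v. g (drop j v)) ` {..R}"
  proof
    fix x assume "x \<in> range (\<lambda>u v. g (drop R (u @ v)))"
    then obtain u where x: "x = (\<lambda>v. g (drop R (u @ v)))" by auto
    show "x \<in> range (\<lambda>u v. g (u @ v)) \<union> (\<lambda>j v. g (drop j v)) ` {..R}"
    proof (cases "length u \<ge> R")
      case True
      then have "x = (\<lambda>v. g (drop R u @ v))" unfolding x by simp
      then show ?thesis by blast
    next
      case False
      then have "x = (\<lambda>v. g (drop (R - length u) v))" unfolding x by simp
      then show ?thesis by auto
    qed
  qed
  moreover have "finite (range (\<lambda>u v. g (u @ v)) \<union> (\<lambda>j v. g (drop j v)) ` {..R})"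
    using a unfolding regular_fun_def by simp
  ultimately show ?thesis unfolding regular_fun_def by (rule finite_subset)
qed

lemma regular_fun_finite_range: "regular_fun g \<Longrightarrow> finite (range g)"
proof -
  assume "regular_fun g"
  then have "finite ((\<lambda>\<rho>. \<rho> []) ` range (\<lambda>u v. g (u @ v)))" unfolding regular_fun_def by simp
  moreover have "range g = (\<lambda>\<rho>. \<rho> []) ` range (\<lambda>u v. g (u @ v))" by (auto simp: image_iff)
  ultimately show ?thesis by simp
qed

lemma regular_fun_take_minus:
  fixes g :: "'x list \<Rightarrow> 'y"
  shows "regular_fun g \<Longrightarrow> regular_fun (\<lambda>w. g (take (length w - k) w))"
proof -
  assume a: "regular_fun g"
  define \<Phi> :: "('x list \<Rightarrow> 'y) \<times> 'y list \<Rightarrow> 'x list \<Rightarrow> 'y"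
    where "\<Phi> = (\<lambda>(\<rho>, l) v. if length v \<ge> k then \<rho> (take (length v - k) v) else l ! (k - length v))"
  have "range (\<lambda>u v. g (take (length (u @ v) - k) (u @ v))) \<subseteq>
        \<Phi> ` (range (\<lambda>u v. g (u @ v)) \<times> {l. set l \<subseteq> range g \<and> length l = Suc k})"
  proof
    fix x assume "x \<in> range (\<lambda>u v. g (take (length (u @ v) - k) (u @ v)))"
    then obtain u where x: "x = (\<lambda>v. g (take (length (u @ v) - k) (u @ v)))" by auto
    define l where "l = map (\<lambda>j. g (take (length u - j) u)) [0..<Suc k]"
    have "x = \<Phi> ((\<lambda>v. g (u @ v)), l)"
    proof
      fix v
      show "x v = \<Phi> (\<lambda>v. g (u @ v), l) v"
      proof (cases "length v \<ge> k")
        case True then show ?thesis unfolding x \<Phi>_def by (simp add: take_append)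
      next
        case False
        then have "take (length (u @ v) - k) (u @ v) = take (length u - (k - length v)) u"
          by (simp add: take_append)
        then show ?thesis unfolding x \<Phi>_def l_def using False by (simp del: upt_Suc)
      qed
    qed
    moreover have "l \<in> {l. set l \<subseteq> range g \<and> length l = Suc k}" unfolding l_def by auto
    ultimately show "x \<in> \<Phi> ` (range (\<lambda>u v. g (u @ v)) \<times> {l. set l \<subseteq> range g \<and> length l = Suc k})" by blast
  qed
  moreover have "finite (\<Phi> ` (range (\<lambda>u v. g (u @ v)) \<times> {l. set l \<subseteq> range g \<and> length l = Suc k}))"
  proof -
    have "finite (range (\<lambda>u v. g (u @ v)))" using a unfolding regular_fun_def .
    moreover have "finite {l. set l \<subseteq> range g \<and> length l = Suc k}"
      by (rule finite_lists_length_eq[OF regular_fun_finite_range[OF a]])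
    ultimately show ?thesis by simp
  qed
  ultimately show ?thesis unfolding regular_fun_def by (simp add: finite_subset)
qed

definition all_windows :: "('b list \<Rightarrow> bool) \<Rightarrow> nat \<Rightarrow> 'b list \<Rightarrow> bool" where
  "all_windows P K w \<longleftrightarrow> (\<forall>q. q + K \<le> length w \<longrightarrow> P (take K (drop q w)))"

lemma all_windows_append:
  assumes "K \<ge> 1"
  shows "all_windows P K (u @ v) \<longleftrightarrow> all_windows P K u \<and> all_windows P K (drop (length u - (K - 1)) u @ v)"
proof -
  define t where "t = drop (length u - (K - 1)) u"
  define u0 where "u0 = take (length u - (K - 1)) u"
  have u: "u = u0 @ t" unfolding t_def u0_def by simp
  have lu0: "length u0 = length u - (K - 1)" unfolding u0_def by simp
  have w1: "take K (drop q (u @ v)) = take K (drop q u)" if "q + K \<le> length u" for q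
  proof -
    have "drop q (u @ v) = drop q u @ v" using that by simp
    moreover have "K \<le> length (drop q u)" using that by simp
    ultimately show ?thesis by simp
  qed
  have w2: "take K (drop (length u0 + q) (u @ v)) = take K (drop q (t @ v))" for q
    unfolding u by simp
  show ?thesis
  proof
    assume L: "all_windows P K (u @ v)"
    have "all_windows P K u" unfolding all_windows_def
    proof (intro allI impI)
      fix q assume "q + K \<le> length u"
      moreover have "q + K \<le> length (u @ v)" using \<open>q + K \<le> length u\<close> by simp
      then have "P (take K (drop q (u @ v)))" using L unfolding all_windows_def by blast
      ultimately show "P (take K (drop q u))" using w1[of q] by simp
    qed
    moreover have "all_windows P K (t @ v)" unfolding all_windows_def
    proof (intro allI impI)
      fix q assume q: "q + K \<le> length (t @ v)"
      have "length u0 + q + K \<le> length (u @ v)" using q u by simp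
      then show "P (take K (drop q (t @ v)))" using L w2[of q] unfolding all_windows_def
        by (metis add.commute add.left_commute)
    qed
    ultimately show "all_windows P K u \<and> all_windows P K (drop (length u - (K - 1)) u @ v)" unfolding t_def by simp
  next
    assume R: "all_windows P K u \<and> all_windows P K (drop (length u - (K - 1)) u @ v)"
    show "all_windows P K (u @ v)" unfolding all_windows_def
    proof (intro allI impI)
      fix q assume q: "q + K \<le> length (u @ v)"
      show "P (take K (drop q (u @ v)))"
      proof (cases "q + K \<le> length u")
        case True
        then have "P (take K (drop q u))" using R unfolding all_windows_def by blast
        then show ?thesis by (simp only: w1[OF True])
      next
        case False
        then have "q \<ge> length u0" using lu0 assms by simp
        then obtain q' where q': "q = length u0 + q'" using le_Suc_ex by blast
        have "q' + K \<le> length (t @ v)" using q q' u by simp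
        then show ?thesis using R w2[of q'] q' unfolding all_windows_def t_def by auto
      qed
    qed
  qed
qed

lemma regular_fun_all_windows:
  assumes "K \<ge> 1"
  shows "regular_fun (all_windows P K :: 'b::finite list \<Rightarrow> bool)"
proof -
  have "range (\<lambda>u v. all_windows P K (u @ v))
      \<subseteq> (\<lambda>(b, t) v. b \<and> all_windows P K (t @ v)) ` (UNIV \<times> {xs :: 'b list. set xs \<subseteq> UNIV \<and> length xs \<le> K - 1})"
  proof
    fix x :: "'b list \<Rightarrow> bool" assume "x \<in> range (\<lambda>u v. all_windows P K (u @ v))"
    then obtain u :: "'b list" where x: "x = (\<lambda>v. all_windows P K (u @ v))" by auto
    have "x v = (all_windows P K u \<and> all_windows P K (drop (length u - (K - 1)) u @ v))" for v
      unfolding x by (rule all_windows_append[OF assms])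
    then have "x = (\<lambda>(b, t) v. b \<and> all_windows P K (t @ v)) (all_windows P K u, drop (length u - (K - 1)) u)"
      by auto
    then show "x \<in> (\<lambda>(b, t) v. b \<and> all_windows P K (t @ v)) ` (UNIV \<times> {xs. set xs \<subseteq> UNIV \<and> length xs \<le> K - 1})"
      by (rule image_eqI[where x="(all_windows P K u, drop (length u - (K - 1)) u)"]) auto
  qed
  moreover have "finite ((\<lambda>(b, t) v. b \<and> all_windows P K (t @ v))
      ` (UNIV \<times> {xs :: 'b list. set xs \<subseteq> UNIV \<and> length xs \<le> K - 1}))"
    by (intro finite_imageI finite_cartesian_product finite_lists_length_le) simp_all
  ultimately show ?thesis unfolding regular_fun_def by (rule finite_subset)
qed

section \<open>Labelled graphs and the shifts they present\<close>

fun path_rel :: "nat set \<Rightarrow> (nat \<Rightarrow> nat) \<Rightarrow> (nat \<Rightarrow> nat) \<Rightarrow> (nat \<Rightarrow> 'a) \<Rightarrow> 'a list \<Rightarrow> (nat \<times> nat) set" where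
  "path_rel E src tgt lab [] = Id"
| "path_rel E src tgt lab (a # u) = {(s,t). \<exists>e\<in>E. lab e = a \<and> src e = s \<and> (tgt e, t) \<in> path_rel E src tgt lab u}"

lemma path_rel_append: "path_rel E src tgt lab (u @ v) = path_rel E src tgt lab u O path_rel E src tgt lab v"
  by (induction u) auto

lemma path_rel_subset: "u \<noteq> [] \<Longrightarrow> path_rel E src tgt lab u \<subseteq> (src ` E \<union> tgt ` E) \<times> (src ` E \<union> tgt ` E)"
proof (induction u)
  case Nil then show ?case by simp
next
  case (Cons a u)
  show ?case
  proof
    fix p assume p: "p \<in> path_rel E src tgt lab (a # u)"
    obtain s t where st: "p = (s, t)" by (cases p)
    obtain e where e: "e \<in> E" "lab e = a" "src e = s" "(tgt e, t) \<in> path_rel E src tgt lab u"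
      using p st by auto
    have "t \<in> src ` E \<union> tgt ` E"
    proof (cases "u = []")
      case True then show ?thesis using e by auto
    next
      case False then show ?thesis using Cons.IH e(4) by blast
    qed
    then show "p \<in> (src ` E \<union> tgt ` E) \<times> (src ` E \<union> tgt ` E)" using e st by auto
  qed
qed

lemma finite_range_path_rel: "finite E \<Longrightarrow> finite (range (path_rel E src tgt lab))"
proof -
  assume fE: "finite E"
  have "range (path_rel E src tgt lab) \<subseteq> insert Id (Pow ((src ` E \<union> tgt ` E) \<times> (src ` E \<union> tgt ` E)))"
  proof
    fix A assume "A \<in> range (path_rel E src tgt lab)"
    then obtain u where u: "A = path_rel E src tgt lab u" by auto
    show "A \<in> insert Id (Pow ((src ` E \<union> tgt ` E) \<times> (src ` E \<union> tgt ` E)))"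
    proof (cases "u = []")
      case True then show ?thesis using u by simp
    next
      case False then show ?thesis using u path_rel_subset[OF False, of E src tgt lab] by simp
    qed
  qed
  moreover have "finite (insert Id (Pow ((src ` E \<union> tgt ` E) \<times> (src ` E \<union> tgt ` E))))" using fE by simp
  ultimately show ?thesis by (rule finite_subset)
qed

lemma path_rel_concat_replicate: "path_rel E src tgt lab (concat (replicate j w)) = (path_rel E src tgt lab w) ^^ j"
proof (induction j)
  case (Suc j)
  then show ?case by (simp add: path_rel_append relpow_commute)
qed simp

definition block :: "(int \<Rightarrow> 'a) \<Rightarrow> int \<Rightarrow> nat \<Rightarrow> 'a list" where
  "block x c L = map (\<lambda>k. x (c + int k)) [0..<L]"

lemma length_block[simp]: "length (block x c L) = L" by (simp add: block_def)
lemma nth_block[simp]: "k < L \<Longrightarrow> block x c L ! k = x (c + int k)" by (simp add: block_def)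

lemma block_Suc: "block x c (Suc L) = x c # block x (c + 1) L"
proof (rule nth_equalityI)
  fix k assume "k < length (block x c (Suc L))"
  then show "block x c (Suc L) ! k = (x c # block x (c + 1) L) ! k"
    by (cases k) (auto simp: algebra_simps)
qed simp

lemma block_add: "block x c (L1 + L2) = block x c L1 @ block x (c + int L1) L2"
proof (rule nth_equalityI)
  fix k assume "k < length (block x c (L1 + L2))"
  then show "block x c (L1 + L2) ! k = (block x c L1 @ block x (c + int L1) L2) ! k"
    by (auto simp: nth_append algebra_simps of_nat_diff)
qed simp

lemma periodic_shift_mult:
  assumes "\<And>i. x (i + int P) = x i"
  shows "x (i + z * int P) = x i"
proof -
  have pos: "x (i + int n * int P) = x i" for i n
  proof (induction n arbitrary: i)
    case (Suc n)
    have "x (i + int (Suc n) * int P) = x ((i + int n * int P) + int P)" by (simp add: algebra_simps)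
    then show ?case using Suc assms by simp
  qed simp
  show ?thesis
  proof (cases "z \<ge> 0")
    case True then show ?thesis using pos[of i "nat z"] by simp
  next
    case False
    then show ?thesis using pos[of "i + z * int P" "nat (-z)"] by simp
  qed
qed

lemma periodic_mod:
  assumes "\<And>i. x (i + int m) = x i"
  shows "x j = x (j mod int m)"
proof -
  have "x (j mod int m + (j div int m) * int m) = x (j mod int m)" by (rule periodic_shift_mult[of x m, OF assms])
  then show ?thesis by (simp add: mod_div_mult_eq)
qed

lemma block_periodic:
  assumes "\<And>i. x (i + int m) = x i"
  shows "block x c (j * m) = concat (replicate j (block x c m))"
proof (induction j arbitrary: c)
  case (Suc j)
  have "block x c (Suc j * m) = block x c m @ block x (c + int m) (j * m)"
    by (simp add: block_add[symmetric] add_ac)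
  also have "block x (c + int m) (j * m) = block x c (j * m)"
    unfolding block_def using assms by (simp add: add_ac) (metis add.assoc add.commute)
  finally show ?case using Suc by simp
qed (simp add: block_def)

lemma path_rel_block:
  assumes "\<And>i. \<xi> i \<in> E \<and> tgt (\<xi> i) = src (\<xi> (i + 1))" "\<And>i. x i = lab (\<xi> i)"
  shows "(src (\<xi> c), src (\<xi> (c + int L))) \<in> path_rel E src tgt lab (block x c L)"
proof (induction L arbitrary: c)
  case 0 then show ?case by (simp add: block_def)
next
  case (Suc L)
  have "(src (\<xi> (c + 1)), src (\<xi> (c + 1 + int L))) \<in> path_rel E src tgt lab (block x (c + 1) L)" by (rule Suc)
  then show ?case unfolding block_Suc using assms by (auto simp: add_ac intro!: bexI[of _ "\<xi> c"])
qed

lemma path_rel_obtain_edges: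
  "(s, t) \<in> path_rel E src tgt lab u \<Longrightarrow> u \<noteq> [] \<Longrightarrow>
   \<exists>es. length es = length u \<and> (\<forall>k<length u. es ! k \<in> E \<and> lab (es ! k) = u ! k) \<and>
        (\<forall>k. Suc k < length u \<longrightarrow> tgt (es ! k) = src (es ! Suc k)) \<and>
        src (es ! 0) = s \<and> tgt (es ! (length u - 1)) = t"
proof (induction u arbitrary: s)
  case Nil then show ?case by simp
next
  case (Cons a u)
  then obtain e where e: "e \<in> E" "lab e = a" "src e = s" "(tgt e, t) \<in> path_rel E src tgt lab u" by auto
  show ?case
  proof (cases "u = []")
    case True
    then show ?thesis using e by (intro exI[of _ "[e]"]) auto
  next
    case False
    from Cons.IH[OF e(4) False] obtain es where es:
      "length es = length u" "\<forall>k<length u. es ! k \<in> E \<and> lab (es ! k) = u ! k"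
      "\<forall>k. Suc k < length u \<longrightarrow> tgt (es ! k) = src (es ! Suc k)"
      "src (es ! 0) = tgt e" "tgt (es ! (length u - 1)) = t" by blast
    show ?thesis
    proof (intro exI[of _ "e # es"] conjI allI impI)
      show "\<And>k. k < length (a # u) \<Longrightarrow> (e # es) ! k \<in> E"
        using es e by (case_tac k) auto
      show "\<And>k. k < length (a # u) \<Longrightarrow> lab ((e # es) ! k) = (a # u) ! k"
        using es e by (case_tac k) auto
      show "\<And>k. Suc k < length (a # u) \<Longrightarrow> tgt ((e # es) ! k) = src ((e # es) ! Suc k)"
        using es e by (case_tac k) auto
      show "tgt ((e # es) ! (length (a # u) - 1)) = t"
        using es False by (cases u) auto
    qed (use es e in auto)
  qed
qed

definition presented_shift :: "nat set \<Rightarrow> (nat \<Rightarrow> nat) \<Rightarrow> (nat \<Rightarrow> nat) \<Rightarrow> (nat \<Rightarrow> 'a) \<Rightarrow> (int \<Rightarrow> 'a) set" where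
  "presented_shift E src tgt lab =
     {x. \<exists>\<xi>::int \<Rightarrow> nat. (\<forall>i. \<xi> i \<in> E \<and> tgt (\<xi> i) = src (\<xi> (i + 1))) \<and> (\<forall>i. x i = lab (\<xi> i))}"

lemma nat_mod_add_one:
  assumes "L > 0"
  shows "nat ((i + 1) mod int L) = (if Suc (nat (i mod int L)) < L then Suc (nat (i mod int L)) else 0)"
proof -
  have bounds: "0 \<le> i mod int L" "i mod int L < int L" using assms by simp_all
  have "(i + 1) mod int L = (i mod int L + 1) mod int L" by (simp add: mod_simps)
  also have "\<dots> = (if i mod int L + 1 < int L then i mod int L + 1 else 0)"
  proof (cases "i mod int L + 1 < int L")
    case False
    then have "i mod int L + 1 = int L" using bounds by simp
    then show ?thesis by simp
  qed (use bounds in simp)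
  moreover have "Suc (nat (i mod int L)) < L \<longleftrightarrow> i mod int L + 1 < int L"
    using bounds by linarith
  ultimately show ?thesis using bounds by (simp add: nat_add_distrib)
qed

lemma presented_shift_imp_cycle:
  assumes "finite E" and "x \<in> presented_shift E src tgt lab" and per: "\<And>i. x (i + int m) = x i"
  shows "\<exists>s. (s, s) \<in> (path_rel E src tgt lab (block x c m))\<^sup>+"
proof -
  obtain \<xi> where \<xi>: "\<And>i. \<xi> i \<in> E \<and> tgt (\<xi> i) = src (\<xi> (i + 1))" "\<And>i. x i = lab (\<xi> i)"
    using assms(2) unfolding presented_shift_def by blast
  define f where "f k = src (\<xi> (c + int (k * m)))" for k
  have "range f \<subseteq> src ` E" unfolding f_def using \<xi>(1) by auto
  then have "\<not> inj f" using assms(1) finite_imageD finite_subset infinite_UNIV_nat by blast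
  then obtain a b where ab: "a < b" "f a = f b" unfolding inj_def by (metis linorder_neqE_nat)
  have end_b: "c + int (a * m) + int ((b - a) * m) = c + int (b * m)"
    using ab by (simp add: diff_mult_distrib of_nat_diff)
  have "(f a, f b) \<in> path_rel E src tgt lab (block x (c + int (a * m)) ((b - a) * m))"
    using path_rel_block[where \<xi>=\<xi> and x=x, OF \<xi>, of "c + int (a * m)" "(b - a) * m"]
    unfolding end_b f_def .
  moreover have "block x (c + int (a * m)) m = block x c m"
  proof -
    have "x (c + int (a * m) + int k) = x (c + int k)" for k
      using periodic_shift_mult[of x m, OF per, of "c + int k" "int a"] by (simp add: add_ac)
    then show ?thesis unfolding block_def by simp
  qed
  ultimately have "(f a, f a) \<in> path_rel E src tgt lab (block x c m) ^^ (b - a)"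
    using ab by (simp add: block_periodic[of x m, OF per] path_rel_concat_replicate)
  then have "(f a, f a) \<in> (path_rel E src tgt lab (block x c m))\<^sup>+"
    using ab unfolding trancl_power by (intro exI[of _ "b - a"]) simp
  then show ?thesis by blast
qed

lemma closed_walk_imp_presented_shift:
  assumes L: "L > 0" and len: "length es = L"
    and edges: "\<forall>k<L. es ! k \<in> E \<and> lab (es ! k) = x (c + int k)"
    and walk: "\<forall>k. Suc k < L \<longrightarrow> tgt (es ! k) = src (es ! Suc k)"
    and closed: "tgt (es ! (L - 1)) = src (es ! 0)"
    and per: "\<And>i. x (i + int L) = x i"
  shows "x \<in> presented_shift E src tgt lab"
proof -
  define k where "k i = nat ((i - c) mod int L)" for i
  have k: "k i < L" "int (k i) = (i - c) mod int L" for i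
    using L by (simp_all add: k_def nat_less_iff)
  have "es ! k i \<in> E" for i using edges k by blast
  moreover have "tgt (es ! k i) = src (es ! k (i + 1))" for i
  proof -
    have next_k: "k (i + 1) = (if Suc (k i) < L then Suc (k i) else 0)"
      using nat_mod_add_one[OF L, of "i - c"] unfolding k_def by (simp add: diff_add_eq)
    show ?thesis
    proof (cases "Suc (k i) < L")
      case False
      then have "k i = L - 1" using k(1)[of i] by simp
      then show ?thesis using closed next_k False by simp
    qed (use walk next_k in simp)
  qed
  moreover have "x i = lab (es ! k i)" for i
  proof -
    have "i = c + int (k i) + ((i - c) div int L) * int L"
      using k(2)[of i] by (simp add: div_mod_decomp_int[symmetric] algebra_simps)
    then have "x i = x (c + int (k i))" using periodic_shift_mult[of x L, OF per] by metis
    then show ?thesis using edges k(1) by simp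
  qed
  ultimately show ?thesis
    unfolding presented_shift_def by (intro CollectI exI[of _ "\<lambda>i. es ! k i"]) auto
qed

lemma periodic_in_presented_shift_iff:
  assumes "finite E" and "m > 0" and per: "\<And>i. x (i + int m) = x i"
  shows "x \<in> presented_shift E src tgt lab \<longleftrightarrow> (\<exists>s. (s, s) \<in> (path_rel E src tgt lab (block x c m))\<^sup>+)"
proof
  assume "x \<in> presented_shift E src tgt lab"
  then show "\<exists>s. (s, s) \<in> (path_rel E src tgt lab (block x c m))\<^sup>+"
    using assms(1) per by (blast intro: presented_shift_imp_cycle)
next
  assume "\<exists>s. (s, s) \<in> (path_rel E src tgt lab (block x c m))\<^sup>+"
  then obtain s n where n: "n > 0" "(s, s) \<in> (path_rel E src tgt lab (block x c m)) ^^ n"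
    by (auto simp: trancl_power)
  define L where "L = n * m"
  have L: "L > 0" using n assms(2) unfolding L_def by simp
  have "(s, s) \<in> path_rel E src tgt lab (block x c L)"
    using n unfolding L_def by (simp add: block_periodic[of x m, OF per] path_rel_concat_replicate)
  then obtain es where "length es = L" "\<forall>k<L. es ! k \<in> E \<and> lab (es ! k) = x (c + int k)"
      "\<forall>k. Suc k < L \<longrightarrow> tgt (es ! k) = src (es ! Suc k)" "tgt (es ! (L - 1)) = src (es ! 0)"
    using path_rel_obtain_edges[of s s E src tgt lab "block x c L"] L by (auto simp flip: length_greater_0_conv)
  moreover have "x (i + int L) = x i" for i
    using periodic_shift_mult[of x m, OF per, of i "int n"] unfolding L_def by (simp add: mult.commute)
  ultimately show "x \<in> presented_shift E src tgt lab"
    using closed_walk_imp_presented_shift[OF L] by blast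
qed

section \<open>Local rules of continuous maps\<close>

definition cylinder :: "(int \<Rightarrow> 'a) \<Rightarrow> nat \<Rightarrow> (int \<Rightarrow> 'a) set" where
  "cylinder x r = {y. \<forall>i. \<bar>i\<bar> \<le> int r \<longrightarrow> y i = x i}"

lemma PiE_UNIV_eq: "PiE (UNIV::'i set) A = {f. \<forall>i. f i \<in> A i}"
  by (auto simp: PiE_def Pi_def)

lemma topspace_full_shift_topology [simp]: "topspace full_shift_topology = UNIV"
  unfolding full_shift_topology_def by (simp add: PiE_UNIV_eq)

lemma openin_cylinder: "openin full_shift_topology (cylinder x r)"
  unfolding full_shift_topology_def openin_product_topology_alt
proof (intro ballI)
  fix y assume y: "y \<in> cylinder x r"
  define U where "U i = (if \<bar>i\<bar> \<le> int r then {x i} else UNIV)" for i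
  have "{i. U i \<noteq> UNIV} \<subseteq> {-int r..int r}" unfolding U_def by auto
  then have "finite {i \<in> UNIV. U i \<noteq> topspace (discrete_topology UNIV)}"
    by (simp add: finite_subset)
  moreover have "y \<in> PiE UNIV U" using y unfolding U_def cylinder_def PiE_UNIV_eq by auto
  moreover have "PiE UNIV U \<subseteq> cylinder x r" unfolding U_def cylinder_def PiE_UNIV_eq by auto
  ultimately show "\<exists>U. finite {i \<in> UNIV. U i \<noteq> topspace (discrete_topology UNIV)} \<and>
         (\<forall>i\<in>UNIV. openin (discrete_topology UNIV) (U i)) \<and> y \<in> PiE UNIV U \<and> PiE UNIV U \<subseteq> cylinder x r"
    by auto
qed

lemma openin_contains_cylinder:
  assumes "openin full_shift_topology U" "x \<in> U"
  shows "\<exists>r. cylinder x r \<subseteq> U"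
proof -
  obtain V where V: "finite {i \<in> UNIV. V i \<noteq> topspace (discrete_topology UNIV)}" "x \<in> PiE UNIV V" "PiE UNIV V \<subseteq> U"
    using assms unfolding full_shift_topology_def openin_product_topology_alt by blast
  define J where "J = {i. V i \<noteq> UNIV}"
  have fJ: "finite J" using V(1) unfolding J_def by simp
  define r where "r = Max (insert 0 ((\<lambda>i. nat \<bar>i\<bar>) ` J))"
  have rJ: "\<bar>i\<bar> \<le> int r" if "i \<in> J" for i
  proof -
    have "nat \<bar>i\<bar> \<le> r" unfolding r_def using fJ that by (intro Max_ge) auto
    then show ?thesis by simp
  qed
  have "cylinder x r \<subseteq> PiE UNIV V"
  proof
    fix y assume y: "y \<in> cylinder x r"
    show "y \<in> PiE UNIV V" unfolding PiE_UNIV_eq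
    proof
      show "\<forall>i. y i \<in> V i"
      proof
        fix i show "y i \<in> V i"
        proof (cases "i \<in> J")
          case True
          then have "y i = x i" using y rJ unfolding cylinder_def by auto
          then show ?thesis using V(2) unfolding PiE_UNIV_eq by auto
        next
          case False then show ?thesis unfolding J_def by auto
        qed
      qed
    qed
  qed
  then show ?thesis using V(3) by blast
qed

lemma closedin_edge_sequences:
  "closedin (product_topology (\<lambda>_::int. discrete_topology E) UNIV)
     {\<xi>. \<forall>i. \<xi> i \<in> E \<and> tgt (\<xi> i) = src (\<xi> (i + 1))}"
  (is "closedin ?T ?P")
proof -
  have "openin ?T (topspace ?T - ?P)"
    unfolding openin_product_topology_alt
  proof (intro ballI)
    fix \<xi> assume "\<xi> \<in> topspace ?T - ?P"
    then have \<xi>: "\<forall>i. \<xi> i \<in> E" "\<not> (\<forall>i. tgt (\<xi> i) = src (\<xi> (i + 1)))"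
      by (auto simp: PiE_UNIV_eq)
    then obtain i where i: "tgt (\<xi> i) \<noteq> src (\<xi> (i + 1))" by blast
    define U where "U j = (if j = i \<or> j = i + 1 then {\<xi> j} else E)" for j
    have "{j. U j \<noteq> E} \<subseteq> {i, i + 1}" unfolding U_def by auto
    then have "finite {j \<in> UNIV. U j \<noteq> topspace (discrete_topology E)}" by (simp add: finite_subset)
    moreover have "\<forall>j\<in>UNIV. openin (discrete_topology E) (U j)" using \<xi> unfolding U_def by auto
    moreover have "\<xi> \<in> PiE UNIV U" using \<xi> unfolding U_def PiE_UNIV_eq by auto
    moreover have "PiE UNIV U \<subseteq> topspace ?T - ?P"
    proof
      fix \<eta> assume "\<eta> \<in> PiE UNIV U"
      then have \<eta>: "\<forall>j. \<eta> j \<in> U j" unfolding PiE_UNIV_eq by simp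
      then have "\<eta> i = \<xi> i" "\<eta> (i + 1) = \<xi> (i + 1)" unfolding U_def by (metis singletonD)+
      moreover have "\<forall>j. \<eta> j \<in> E" using \<eta> \<xi> unfolding U_def by (metis singletonD)
      ultimately show "\<eta> \<in> topspace ?T - ?P" using i by (auto simp: PiE_UNIV_eq) metis
    qed
    ultimately show "\<exists>U. finite {j \<in> UNIV. U j \<noteq> topspace (discrete_topology E)} \<and>
        (\<forall>j\<in>UNIV. openin (discrete_topology E) (U j)) \<and> \<xi> \<in> PiE UNIV U \<and>
        PiE UNIV U \<subseteq> topspace ?T - ?P"
      by blast
  qed
  moreover have "?P \<subseteq> topspace ?T" by (auto simp: PiE_UNIV_eq)
  ultimately show ?thesis unfolding closedin_def by (simp add: Diff_Diff_Int inf.absorb2)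
qed

lemma compactin_presented_shift:
  assumes "finite E"
  shows "compactin full_shift_topology (presented_shift E src tgt lab)"
proof -
  define T where "T = product_topology (\<lambda>_::int. discrete_topology E) UNIV"
  have "compact_space T" unfolding T_def
    using assms by (simp add: compact_space_product_topology compact_space_discrete_topology)
  then have compact_paths: "compactin T {\<xi>. \<forall>i. \<xi> i \<in> E \<and> tgt (\<xi> i) = src (\<xi> (i + 1))}"
    using closedin_compact_space closedin_edge_sequences[of E tgt src] unfolding T_def by auto
  have cont: "continuous_map T full_shift_topology (\<lambda>\<xi> i. lab (\<xi> i))"
    unfolding full_shift_topology_def continuous_map_componentwise_UNIV
  proof
    fix k
    have "continuous_map T (discrete_topology E) (\<lambda>\<xi>. \<xi> k)"
      unfolding T_def by (rule continuous_map_product_projection) simp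
    then show "continuous_map T (discrete_topology UNIV) (\<lambda>\<xi>. lab (\<xi> k))"
      using continuous_map_compose[of T "discrete_topology E" "\<lambda>\<xi>. \<xi> k" "discrete_topology UNIV" lab]
      by (simp add: o_def)
  qed
  have "(\<lambda>\<xi> i. lab (\<xi> i)) ` {\<xi>. \<forall>i. \<xi> i \<in> E \<and> tgt (\<xi> i) = src (\<xi> (i + 1))}
      = presented_shift E src tgt lab"
    unfolding presented_shift_def by auto
  with image_compactin[OF compact_paths cont] show ?thesis by simp
qed

lemma continuous_map_locally_constant_at_zero:
  assumes "continuous_map (subtopology full_shift_topology X) full_shift_topology \<phi>" and "x \<in> X"
  shows "\<exists>r. \<forall>y\<in>X. y \<in> cylinder x r \<longrightarrow> \<phi> y 0 = \<phi> x 0"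
proof -
  have "continuous_map full_shift_topology (discrete_topology UNIV) (\<lambda>z. z 0)"
    unfolding full_shift_topology_def by (rule continuous_map_product_projection) simp
  from openin_continuous_map_preimage[OF this, of "{\<phi> x 0}"]
  have "openin full_shift_topology {z. z 0 = \<phi> x 0}" by simp
  from openin_continuous_map_preimage[OF assms(1) this]
  have "openin (subtopology full_shift_topology X) {y \<in> X. \<phi> y 0 = \<phi> x 0}" by simp
  then obtain U where U: "openin full_shift_topology U" "{y \<in> X. \<phi> y 0 = \<phi> x 0} = U \<inter> X"
    unfolding openin_subtopology by blast
  then obtain r where "cylinder x r \<subseteq> U"
    using openin_contains_cylinder assms(2) by blast
  then show ?thesis using U(2) by blast
qed

lemma continuous_map_local_rule:
  assumes "compactin full_shift_topology X"
    and cont: "continuous_map (subtopology full_shift_topology X) full_shift_topology \<phi>"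
  shows "\<exists>r. \<forall>y\<in>X. \<forall>z\<in>X. (\<forall>i. \<bar>i\<bar> \<le> int r \<longrightarrow> y i = z i) \<longrightarrow> \<phi> y 0 = \<phi> z 0"
proof -
  obtain rad where rad: "\<And>x. x \<in> X \<Longrightarrow> \<forall>y\<in>X. y \<in> cylinder x (rad x) \<longrightarrow> \<phi> y 0 = \<phi> x 0"
    using continuous_map_locally_constant_at_zero[OF cont] by metis
  have "X \<subseteq> \<Union> ((\<lambda>x. cylinder x (rad x)) ` X)" by (auto simp: cylinder_def)
  then obtain \<F> where \<F>: "finite \<F>" "\<F> \<subseteq> (\<lambda>x. cylinder x (rad x)) ` X" "X \<subseteq> \<Union>\<F>"
    using assms(1) openin_cylinder unfolding compactin_def by (smt (verit, best) imageE)
  obtain F where F: "F \<subseteq> X" "finite F" "\<F> = (\<lambda>x. cylinder x (rad x)) ` F"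
    using finite_subset_image[OF \<F>(1,2)] by blast
  define r where "r = Max (insert 0 (rad ` F))"
  have rad_le: "rad x \<le> r" if "x \<in> F" for x unfolding r_def using F(2) that by (intro Max_ge) auto
  show ?thesis
  proof (intro exI[of _ r] ballI impI)
    fix y z assume y: "y \<in> X" and z: "z \<in> X" and yz: "\<forall>i. \<bar>i\<bar> \<le> int r \<longrightarrow> y i = z i"
    obtain x where x: "x \<in> F" "y \<in> cylinder x (rad x)" using \<F>(3) F(3) y by auto
    have "z \<in> cylinder x (rad x)" using x(2) yz rad_le[OF x(1)] unfolding cylinder_def by force
    then show "\<phi> y 0 = \<phi> z 0" using rad[of x] x F(1) y z by auto
  qed
qed

section \<open>Flips with a local rule\<close>

lemma shift_pow_apply: "shift_pow k x i = x (i + k)" by (simp add: shift_pow_def)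
lemma shift_pow_shift_pow: "shift_pow a (shift_pow b x) = shift_pow (a + b) x"
  by (simp add: shift_pow_def add_ac)
lemma shift_map_eq: "shift_map = shift_pow 1" by (simp add: shift_map_def shift_pow_def fun_eq_iff)
lemma shift_pow_0[simp]: "shift_pow 0 x = x" by (simp add: shift_pow_def)
lemma funpow_shift_map: "(shift_map ^^ m) x = shift_pow (int m) x"
  by (induction m) (auto simp: shift_map_eq shift_pow_shift_pow add_ac)

lemma block_eq_imp_agree:
  assumes "block y (- int r) (2 * r + 1) = block z (- int r) (2 * r + 1)" "\<bar>i\<bar> \<le> int r"
  shows "y i = z i"
proof -
  define k where "k = nat (i + int r)"
  have k: "k < 2 * r + 1" "- int r + int k = i" using assms(2) unfolding k_def by auto
  have "block y (- int r) (2 * r + 1) ! k = block z (- int r) (2 * r + 1) ! k" using assms(1) by simp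
  then show ?thesis using k by simp
qed

lemma shift_pow_in_presented_shift:
  "x \<in> presented_shift E src tgt lab \<Longrightarrow> shift_pow k x \<in> presented_shift E src tgt lab"
proof -
  assume "x \<in> presented_shift E src tgt lab"
  then obtain \<xi> where \<xi>: "\<forall>i. \<xi> i \<in> E \<and> tgt (\<xi> i) = src (\<xi> (i + 1))" "\<forall>i. x i = lab (\<xi> i)"
    unfolding presented_shift_def by blast
  have "\<forall>i. \<xi> (i + k) \<in> E \<and> tgt (\<xi> (i + k)) = src (\<xi> (i + 1 + k))"
    using \<xi>(1) by (metis add.commute add.left_commute)
  then show ?thesis unfolding presented_shift_def using \<xi>(2)
    by (intro CollectI exI[of _ "\<lambda>i. \<xi> (i + k)"]) (auto simp: shift_pow_apply add_ac)
qed

locale local_flip =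
  fixes E :: "nat set" and src tgt :: "nat \<Rightarrow> nat" and lab :: "nat \<Rightarrow> 'a::finite"
    and \<phi> :: "(int \<Rightarrow> 'a) \<Rightarrow> (int \<Rightarrow> 'a)" and r :: nat
  assumes finite_edges: "finite E"
    and flip_shift_map: "\<And>x. x \<in> presented_shift E src tgt lab \<Longrightarrow> \<phi> (shift_map x) = shift_pow (-1) (\<phi> x)"
    and flip_local: "\<And>y z. y \<in> presented_shift E src tgt lab \<Longrightarrow> z \<in> presented_shift E src tgt lab \<Longrightarrow>
               (\<forall>i. \<bar>i\<bar> \<le> int r \<longrightarrow> y i = z i) \<Longrightarrow> \<phi> y 0 = \<phi> z 0"
begin

abbreviation "XG \<equiv> presented_shift E src tgt lab"

lemma flip_shift_pow_nat: "x \<in> XG \<Longrightarrow> \<phi> (shift_pow (int k) x) = shift_pow (- int k) (\<phi> x)"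
proof (induction k)
  case 0 then show ?case by simp
next
  case (Suc k)
  have "shift_pow (int (Suc k)) x = shift_map (shift_pow (int k) x)"
    by (simp add: shift_map_eq shift_pow_shift_pow add_ac)
  then have "\<phi> (shift_pow (int (Suc k)) x) = shift_pow (-1) (\<phi> (shift_pow (int k) x))"
    using flip_shift_map shift_pow_in_presented_shift[OF Suc.prems] by simp
  also have "\<dots> = shift_pow (- int (Suc k)) (\<phi> x)" using Suc by (simp add: shift_pow_shift_pow add_ac)
  finally show ?case .
qed

lemma flip_shift_pow: "x \<in> XG \<Longrightarrow> \<phi> (shift_pow z x) = shift_pow (- z) (\<phi> x)"
proof (cases "z \<ge> 0")
  case True
  assume x: "x \<in> XG"
  then show ?thesis using flip_shift_pow_nat[OF x, of "nat z"] True by simp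
next
  case False
  assume x: "x \<in> XG"
  define k where "k = nat (- z)"
  have zk: "z = - int k" using False unfolding k_def by simp
  define y where "y = shift_pow z x"
  have y: "y \<in> XG" unfolding y_def using x by (rule shift_pow_in_presented_shift)
  have "x = shift_pow (int k) y" unfolding y_def zk by (simp add: shift_pow_shift_pow)
  then have "\<phi> x = shift_pow (- int k) (\<phi> y)" using flip_shift_pow_nat[OF y] by simp
  then have "shift_pow (int k) (\<phi> x) = \<phi> y" by (simp add: shift_pow_shift_pow)
  then show ?thesis unfolding y_def zk by simp
qed

text \<open>Only blocks occurring in \<open>XG\<close> matter; on any other word the choice is arbitrary.\<close>
definition local_rule :: "'a list \<Rightarrow> 'a" where
  "local_rule v = \<phi> (SOME y. y \<in> XG \<and> block y (- int r) (2 * r + 1) = v) 0"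

lemma flip_eq_local_rule:
  assumes x: "x \<in> XG"
  shows "\<phi> x (- i) = local_rule (block x (i - int r) (2 * r + 1))"
proof -
  define y where "y = shift_pow i x"
  have y: "y \<in> XG" unfolding y_def using x by (rule shift_pow_in_presented_shift)
  have sy: "block y (- int r) (2 * r + 1) = block x (i - int r) (2 * r + 1)"
    unfolding y_def block_def by (simp add: algebra_simps shift_pow_apply)
  define y' where "y' = (SOME y'. y' \<in> XG \<and> block y' (- int r) (2 * r + 1) = block x (i - int r) (2 * r + 1))"
  have ex: "\<exists>y'. y' \<in> XG \<and> block y' (- int r) (2 * r + 1) = block x (i - int r) (2 * r + 1)"
    using y sy by blast
  have y': "y' \<in> XG \<and> block y' (- int r) (2 * r + 1) = block x (i - int r) (2 * r + 1)"
    unfolding y'_def by (rule someI_ex[OF ex])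
  have "\<phi> y' 0 = \<phi> y 0"
    using flip_local[of y' y] y' y sy block_eq_imp_agree[of y' r y] by auto
  moreover have "\<phi> y 0 = \<phi> x (- i)" unfolding y_def using flip_shift_pow[OF x] by (simp add: shift_pow_apply)
  ultimately show ?thesis unfolding local_rule_def y'_def[symmetric] by simp
qed

lemma flip_periodic:
  assumes x: "x \<in> XG" and per: "\<And>i. x (i + int m) = x i"
  shows "\<phi> x (j + int m) = \<phi> x j"
proof -
  have "shift_pow (int m) x = x" using per by (simp add: shift_pow_def fun_eq_iff)
  then have "\<phi> x = shift_pow (- int m) (\<phi> x)" using flip_shift_pow[OF x, of "int m"] by simp
  then have "\<phi> x (j + int m) = shift_pow (- int m) (\<phi> x) (j + int m)" by simp
  then show ?thesis by (simp add: shift_pow_apply)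
qed

section \<open>Coding flip-periodic points by words\<close>

text \<open>If \<open>\<sigma>\<^sup>n (\<phi> x) = x\<close>, the second component of the \<open>p\<close>-th letter is \<open>\<phi> x (-(p - r))\<close>.
  When \<open>2N + n = m + 4r + 1 + d\<close> and \<open>x\<close> has period \<open>m\<close>, the first components from
  position \<open>r\<close> on, followed by the second components read backwards, spell one period of \<open>x\<close>;
  the remaining letters at both ends overlap these.\<close>
definition fold_word :: "nat \<Rightarrow> nat \<Rightarrow> (int \<Rightarrow> 'a) \<Rightarrow> ('a \<times> 'a) list" where
  "fold_word n N x = map (\<lambda>p. (x (int p - int r), x (- (int p - int r) - int n))) [0..<N]"

lemma length_fold_word[simp]: "length (fold_word n N x) = N" by (simp add: fold_word_def)
lemma nth_fold_word: "p < N \<Longrightarrow> fold_word n N x ! p = (x (int p - int r), x (- (int p - int r) - int n))"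
  by (simp add: fold_word_def)

definition sym_head :: "nat \<Rightarrow> ('a \<times> 'a) list \<Rightarrow> bool" where
  "sym_head n v \<longleftrightarrow> (\<forall>p p'. p < length v \<longrightarrow> p' < length v \<longrightarrow> p + p' + n = 2 * r \<longrightarrow>
     v ! p' = prod.swap (v ! p))"

definition sym_tail :: "nat \<Rightarrow> ('a \<times> 'a) list \<Rightarrow> bool" where
  "sym_tail d v \<longleftrightarrow> (\<forall>q q'. q < length v \<longrightarrow> q' < length v \<longrightarrow> q + q' + 1 = 2 * r + d \<longrightarrow>
     rev v ! q' = prod.swap (rev v ! q))"

definition window_ok :: "('a \<times> 'a) list \<Rightarrow> bool" where
  "window_ok v \<longleftrightarrow> snd (v ! r) = local_rule (map fst v) \<and> fst (v ! r) = local_rule (rev (map snd v))"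

definition fwd_part :: "('a \<times> 'a) list \<Rightarrow> 'a list" where
  "fwd_part w = map fst (drop r w)"

definition bwd_part :: "nat \<Rightarrow> nat \<Rightarrow> ('a \<times> 'a) list \<Rightarrow> 'a list" where
  "bwd_part n d w = rev (map snd (drop (r + 1 - n) (take (length w - (2 * r + d)) w)))"

text \<open>The words of the form \<open>fold_word n N x\<close>: their overlapping ends are consistent, their
  windows obey the local rule, and the period they spell labels a cycle of the graph.\<close>
definition good_word :: "nat \<Rightarrow> nat \<Rightarrow> ('a \<times> 'a) list \<Rightarrow> bool" where
  "good_word n d w \<longleftrightarrow>
     sym_head n (take (2 * r + 1) w) \<and> sym_tail d (drop (length w - (2 * r + 1)) w) \<and>
     all_windows window_ok (2 * r + 1) w \<and>
     (\<exists>s. (s, s) \<in> (path_rel E src tgt lab (fwd_part w) O path_rel E src tgt lab (bwd_part n d w))\<^sup>+)"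

lemma regular_fun_good_word: "regular_fun (good_word n d)"
proof -
  define K where "K = 2 * r + 1"
  have fst_rel: "regular_fun (\<lambda>w. path_rel E src tgt lab (map fst w))"
  proof (rule regular_fun_hom[where f="\<lambda>a b. a O b"])
    show "finite (range (\<lambda>w. path_rel E src tgt lab (map fst w)))"
      by (rule finite_subset[OF _ finite_range_path_rel[OF finite_edges, of src tgt lab]]) auto
  qed (simp add: path_rel_append)
  have snd_rel: "regular_fun (\<lambda>w. path_rel E src tgt lab (rev (map snd w)))"
  proof (rule regular_fun_hom[where f="\<lambda>a b. b O a"])
    show "finite (range (\<lambda>w. path_rel E src tgt lab (rev (map snd w))))"
      by (rule finite_subset[OF _ finite_range_path_rel[OF finite_edges, of src tgt lab]]) auto
  qed (simp add: path_rel_append)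
  have fwd_rel: "regular_fun (\<lambda>w. path_rel E src tgt lab (fwd_part w))"
    unfolding fwd_part_def using regular_fun_drop[OF fst_rel, of r] by simp
  have bwd_rel: "regular_fun (\<lambda>w. path_rel E src tgt lab (bwd_part n d w))"
    unfolding bwd_part_def
    using regular_fun_take_minus[OF regular_fun_drop[OF snd_rel, of "r + 1 - n"], of "2 * r + d"] by simp
  have components: "regular_fun (\<lambda>w. (take K w, drop (length w - K) w, all_windows window_ok K w,
      path_rel E src tgt lab (fwd_part w), path_rel E src tgt lab (bwd_part n d w)))"
    by (intro regular_fun_pair regular_fun_take regular_fun_suffix regular_fun_all_windows fwd_rel bwd_rel)
      (simp add: K_def)
  define \<Phi> :: "('a \<times> 'a) list \<times> ('a \<times> 'a) list \<times> bool \<times> (nat \<times> nat) set \<times> (nat \<times> nat) set \<Rightarrow> bool"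
    where "\<Phi> = (\<lambda>(a, b, c, R1, R2). sym_head n a \<and> sym_tail d b \<and> c \<and> (\<exists>s. (s, s) \<in> (R1 O R2)\<^sup>+))"
  have "good_word n d = (\<lambda>w. \<Phi> (take K w, drop (length w - K) w, all_windows window_ok K w,
      path_rel E src tgt lab (fwd_part w), path_rel E src tgt lab (bwd_part n d w)))"
    by (simp add: fun_eq_iff good_word_def K_def \<Phi>_def)
  then show ?thesis using regular_fun_comp[OF components] by simp
qed

text \<open>The inverse of \<open>fold_word\<close>, extended \<open>m\<close>-periodically.\<close>
definition unfold_word :: "nat \<Rightarrow> nat \<Rightarrow> nat \<Rightarrow> ('a \<times> 'a) list \<Rightarrow> int \<Rightarrow> 'a" where
  "unfold_word n N m w j =
     (let j0 = nat (j mod int m) in if j0 < N - r then fst (w ! (j0 + r)) else snd (w ! (m + r - n - j0)))"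

context
  fixes n d N m :: nat
  assumes n_le_1: "n \<le> 1" and d_le_1: "d \<le> 1"
    and N_period: "2 * N + n = m + 4 * r + 1 + d" and N_large: "N \<ge> 4 * r + 2"
begin

lemma N_le_period: "m \<ge> N" using N_period n_le_1 d_le_1 N_large by linarith
lemma period_pos: "m > 0" using N_le_period N_large by linarith
lemma period_int: "int m = 2 * int N + int n - 4 * int r - 1 - int d" using N_period by linarith

lemma window_fold_word:
  assumes q: "q + (2 * r + 1) \<le> N"
  shows "map fst (take (2 * r + 1) (drop q (fold_word n N x))) = block x (int q - int r) (2 * r + 1)"
    and "rev (map snd (take (2 * r + 1) (drop q (fold_word n N x)))) = block x (- int q - int n - int r) (2 * r + 1)"
    and "take (2 * r + 1) (drop q (fold_word n N x)) ! r = (x (int q), x (- int q - int n))"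
proof -
  let ?v = "take (2 * r + 1) (drop q (fold_word n N x))"
  have lv: "length ?v = 2 * r + 1" using q by simp
  have vk: "?v ! k = (x (int q + int k - int r), x (- (int q + int k - int r) - int n))" if "k < 2 * r + 1" for k
    using that q by (simp add: nth_fold_word)
  show "map fst ?v = block x (int q - int r) (2 * r + 1)"
    by (rule nth_equalityI) (use lv vk in \<open>auto simp: algebra_simps\<close>)
  show "rev (map snd ?v) = block x (- int q - int n - int r) (2 * r + 1)"
  proof (rule nth_equalityI)
    fix k assume "k < length (rev (map snd ?v))"
    then have k: "k < 2 * r + 1" using lv by simp
    have "rev (map snd ?v) ! k = snd (?v ! (2 * r - k))" using k lv by (simp add: rev_nth)
    also have "\<dots> = x (- (int q + int (2 * r - k) - int r) - int n)" using k vk[of "2 * r - k"] by simp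
    also have "\<dots> = block x (- int q - int n - int r) (2 * r + 1) ! k" using k by (simp add: of_nat_diff algebra_simps)
    finally show "rev (map snd ?v) ! k = block x (- int q - int n - int r) (2 * r + 1) ! k" .
  qed (use lv in simp)
  show "?v ! r = (x (int q), x (- int q - int n))" using vk[of r] by simp
qed

lemma fwd_bwd_fold_word:
  assumes per: "\<And>i. x (i + int m) = x i"
  shows "fwd_part (fold_word n N x) @ bwd_part n d (fold_word n N x) = block x 0 m"
proof (rule nth_equalityI)
  have lf: "length (fwd_part (fold_word n N x)) = N - r" by (simp add: fwd_part_def)
  have lb: "length (bwd_part n d (fold_word n N x)) = N - (2 * r + d) - (r + 1 - n)" using N_large by (simp add: bwd_part_def)
  show "length (fwd_part (fold_word n N x) @ bwd_part n d (fold_word n N x)) = length (block x 0 m)"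
    using lf lb N_period N_large n_le_1 d_le_1 by simp
  fix j assume "j < length (fwd_part (fold_word n N x) @ bwd_part n d (fold_word n N x))"
  then have j: "j < m" using lf lb N_period N_large n_le_1 d_le_1 by simp
  show "(fwd_part (fold_word n N x) @ bwd_part n d (fold_word n N x)) ! j = block x 0 m ! j"
  proof (cases "j < N - r")
    case True
    then have "(fwd_part (fold_word n N x) @ bwd_part n d (fold_word n N x)) ! j = fst (fold_word n N x ! (r + j))"
      using lf by (simp add: nth_append fwd_part_def)
    also have "\<dots> = x (int j)" using True by (simp add: nth_fold_word)
    finally show ?thesis using j by simp
  next
    case False
    define t where "t = j - (N - r)"
    define LB where "LB = N - (2 * r + d) - (r + 1 - n)"
    have t: "t < LB" using j False N_period N_large n_le_1 d_le_1 unfolding t_def LB_def by linarith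
    have "(fwd_part (fold_word n N x) @ bwd_part n d (fold_word n N x)) ! j = bwd_part n d (fold_word n N x) ! t"
      using lf False unfolding t_def by (simp add: nth_append)
    also have "\<dots> = snd (fold_word n N x ! (r + 1 - n + (LB - Suc t)))"
      using t N_large unfolding bwd_part_def LB_def by (simp add: rev_nth)
    also have "r + 1 - n + (LB - Suc t) = 2 * N - 3 * r - d - 1 - j"
      using t False j N_period N_large n_le_1 d_le_1 unfolding t_def LB_def by linarith
    also have "snd (fold_word n N x ! (2 * N - 3 * r - d - 1 - j)) = x (int j - int m)"
    proof -
      have lt: "2 * N - 3 * r - d - 1 - j < N" using False j N_period N_large n_le_1 d_le_1 by linarith
      have "int (2 * N - 3 * r - d - 1 - j) = 2 * int N - 3 * int r - int d - 1 - int j"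
        using False j N_period N_large n_le_1 d_le_1 by linarith
      moreover have "int m = 2 * int N + int n - 4 * int r - 1 - int d" using N_period by linarith
      ultimately have "- (int (2 * N - 3 * r - d - 1 - j) - int r) - int n = int j - int m" by linarith
      moreover have "snd (fold_word n N x ! (2 * N - 3 * r - d - 1 - j)) = x (- (int (2 * N - 3 * r - d - 1 - j) - int r) - int n)"
        using lt by (simp add: nth_fold_word)
      ultimately show ?thesis by simp
    qed
    also have "x (int j - int m) = x (int j)" using per[of "int j - int m"] by simp
    finally show ?thesis using j by simp
  qed
qed

lemma sym_head_fold_word: "sym_head n (take (2 * r + 1) (fold_word n N x))"
  unfolding sym_head_def
proof (intro allI impI)
  define K where "K = 2 * r + 1"
  define w where "w = fold_word n N x"
  fix p p' assume "p < length (take (2 * r + 1) (fold_word n N x))"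
    and "p' < length (take (2 * r + 1) (fold_word n N x))" and e: "p + p' + n = 2 * r"
  then have "p < N" "p' < N" "p < K" "p' < K" using N_large by (auto simp: K_def)
  moreover have a1: "int p' - int r = - (int p - int r) - int n"
    and a2: "- (int p' - int r) - int n = int p - int r" using e by linarith+
  ultimately have "take K w ! p' = prod.swap (take K w ! p)"
    unfolding w_def by (simp add: nth_fold_word a1 a2)
  then show "take (2 * r + 1) (fold_word n N x) ! p' = prod.swap (take (2 * r + 1) (fold_word n N x) ! p)"
    unfolding K_def w_def .
qed

lemma sym_tail_fold_word:
  assumes per: "\<And>i. x (i + int m) = x i"
  shows "sym_tail d (drop (N - (2 * r + 1)) (fold_word n N x))"
  unfolding sym_tail_def
proof (intro allI impI)
  define K where "K = 2 * r + 1"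
  define w where "w = fold_word n N x"
  have NK2: "K \<le> N" using N_large unfolding K_def by simp
  fix q q' assume q: "q < length (drop (N - (2 * r + 1)) (fold_word n N x))"
    and q': "q' < length (drop (N - (2 * r + 1)) (fold_word n N x))" and e: "q + q' + 1 = 2 * r + d"
  have qK: "q < K" "q' < K" using q q' NK2 by (auto simp: K_def)
  have rq': "rev (drop (N - K) w) ! q' = w ! (N - 1 - q')" using qK NK2 q'
    by (simp add: rev_nth w_def)
  have rq0: "rev (drop (N - K) w) ! q = w ! (N - 1 - q)" using qK NK2 q by (simp add: rev_nth w_def)
  have lt: "N - 1 - q < N" "N - 1 - q' < N" using NK2 qK unfolding K_def by auto
  have iq: "int (N - 1 - q) = int N - 1 - int q" "int (N - 1 - q') = int N - 1 - int q'"
    using NK2 qK unfolding K_def by auto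
  have ie: "int q + int q' + 1 = 2 * int r + int d" using e by linarith
  have a1: "int (N - 1 - q') - int r = (- (int (N - 1 - q) - int r) - int n) + int m"
    using iq ie period_int by linarith
  have a2: "- (int (N - 1 - q') - int r) - int n = (int (N - 1 - q) - int r) - int m"
    using iq ie period_int by linarith
  have e1: "x (int (N - 1 - q') - int r) = x (- (int (N - 1 - q) - int r) - int n)"
    by (simp only: a1 per)
  have e2: "x (- (int (N - 1 - q') - int r) - int n) = x (int (N - 1 - q) - int r)"
    using per[of "int (N - 1 - q) - int r - int m"] by (simp only: a2) simp
  have "rev (drop (N - K) w) ! q' = prod.swap (rev (drop (N - K) w) ! q)"
    unfolding rq' rq0 unfolding w_def
    by (simp only: nth_fold_word[OF lt(1)] nth_fold_word[OF lt(2)] swap_simp e1 e2)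
  then show "rev (drop (N - (2 * r + 1)) (fold_word n N x)) ! q' =
      prod.swap (rev (drop (N - (2 * r + 1)) (fold_word n N x)) ! q)"
    unfolding K_def w_def .
qed

lemma all_windows_fold_word:
  assumes x: "x \<in> XG" and refl: "\<And>j. \<phi> x (j + int n) = x j"
  shows "all_windows window_ok (2 * r + 1) (fold_word n N x)"
  unfolding all_windows_def
proof (intro allI impI)
  fix q assume "q + (2 * r + 1) \<le> length (fold_word n N x)"
  then have q: "q + (2 * r + 1) \<le> N" by simp
  have "x (- int q - int n) = \<phi> x (- int q)" using refl[of "- int q - int n"] by simp
  also have "\<dots> = local_rule (block x (int q - int r) (2 * r + 1))" by (rule flip_eq_local_rule[OF x])
  finally have 1: "x (- int q - int n) = local_rule (block x (int q - int r) (2 * r + 1))" .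
  have "x (int q) = \<phi> x (- (- int q - int n))" using refl[of "int q"] by (simp add: add.commute)
  also have "\<dots> = local_rule (block x (- int q - int n - int r) (2 * r + 1))"
    by (rule flip_eq_local_rule[OF x])
  finally have 2: "x (int q) = local_rule (block x (- int q - int n - int r) (2 * r + 1))" .
  show "window_ok (take (2 * r + 1) (drop q (fold_word n N x)))"
    unfolding window_ok_def window_fold_word[OF q] using 1 2 by simp
qed

lemma good_word_fold_word:
  assumes x: "x \<in> XG" and per: "\<And>i. x (i + int m) = x i" and refl: "\<And>j. \<phi> x (j + int n) = x j"
  shows "good_word n d (fold_word n N x)"
proof -
  have "\<exists>s. (s, s) \<in> (path_rel E src tgt lab (block x 0 m))\<^sup>+"
    using periodic_in_presented_shift_iff[where x=x and c=0, OF finite_edges period_pos per] x by simp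
  then have "\<exists>s. (s, s) \<in> (path_rel E src tgt lab (fwd_part (fold_word n N x))
      O path_rel E src tgt lab (bwd_part n d (fold_word n N x)))\<^sup>+"
    unfolding fwd_bwd_fold_word[where x=x, OF per, symmetric] path_rel_append .
  with sym_head_fold_word sym_tail_fold_word[where x=x, OF per] all_windows_fold_word[OF x refl] show ?thesis
    unfolding good_word_def by simp
qed

lemma unfold_word_mod: "unfold_word n N m w j = unfold_word n N m w (j mod int m)"
  unfolding unfold_word_def by simp

lemma unfold_word_periodic: "unfold_word n N m w (j + int m) = unfold_word n N m w j"
  unfolding unfold_word_def by simp

lemma unfold_word_at:
  assumes "0 \<le> j" "j < int m"
  shows "unfold_word n N m w j = (if nat j < N - r then fst (w ! (nat j + r)) else snd (w ! (m + r - n - nat j)))"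
  using assms unfolding unfold_word_def by simp

lemma unfold_word_nat:
  assumes "j < m"
  shows "unfold_word n N m w (int j) = (if j < N - r then fst (w ! (j + r)) else snd (w ! (m + r - n - j)))"
  using unfold_word_at[of "int j" w] assms by simp

lemma good_word_tail_swap:
  assumes lw: "length w = N" and G: "good_word n d w" and p: "p < N" and P': "P' < N"
    and q1: "N - 1 - p \<le> 2 * r" and q2: "N - 1 - P' \<le> 2 * r" and e: "(N - 1 - p) + (N - 1 - P') + 1 = 2 * r + d"
  shows "w ! P' = prod.swap (w ! p)"
proof -
  define K where "K = 2 * r + 1"
  have NK2: "K \<le> N" using N_large unfolding K_def by simp
  have S: "sym_tail d (drop (N - K) w)" using G lw unfolding good_word_def K_def by simp
  define q where "q = N - 1 - p"
  define q' where "q' = N - 1 - P'"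
  have qK: "q < length (drop (N - K) w)" "q' < length (drop (N - K) w)"
    using q1 q2 NK2 lw unfolding q_def q'_def K_def by auto
  have r1: "rev (drop (N - K) w) ! q = w ! p" using qK NK2 lw p unfolding q_def
    by (simp add: rev_nth)
  have r2: "rev (drop (N - K) w) ! q' = w ! P'" using qK NK2 lw P' unfolding q'_def
    by (simp add: rev_nth)
  have e': "q + q' + 1 = 2 * r + d" using e unfolding q_def q'_def .
  have "rev (drop (N - K) w) ! q' = prod.swap (rev (drop (N - K) w) ! q)"
    using S[unfolded sym_tail_def, rule_format, OF qK e'] .
  then show ?thesis using r1 r2 by simp
qed

lemma good_word_head_swap:
  assumes lw: "length w = N" and G: "good_word n d w" and e: "p + p' + n = 2 * r"
  shows "w ! p' = prod.swap (w ! p)"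
proof -
  define K where "K = 2 * r + 1"
  have NK2: "K \<le> N" using N_large unfolding K_def by simp
  have S: "sym_head n (take K w)" using G unfolding good_word_def K_def by simp
  have pK: "p < length (take K w)" "p' < length (take K w)" using e NK2 lw unfolding K_def by auto
  have "take K w ! p' = prod.swap (take K w ! p)" using S[unfolded sym_head_def, rule_format, OF pK e] .
  then show ?thesis using pK by simp
qed

lemma unfold_word_fst:
  assumes lw: "length w = N" and G: "good_word n d w" and p: "p < N"
  shows "unfold_word n N m w (int p - int r) = fst (w ! p)"
proof (cases "r \<le> p")
  case True
  have "unfold_word n N m w (int p - int r) = unfold_word n N m w (int (p - r))"
    by (rule arg_cong[where f="unfold_word n N m w"]) (use True in linarith)
  also have "\<dots> = fst (w ! (p - r + r))"
  proof -
    have "p - r < m" "p - r < N - r" using p N_le_period True by linarith+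
    then show ?thesis using unfold_word_nat[of "p - r" w] by simp
  qed
  also have "p - r + r = p" using True by simp
  finally show ?thesis .
next
  case False
  have "unfold_word n N m w (int p - int r) = unfold_word n N m w (int p - int r + int m)" by (simp add: unfold_word_periodic)
  also have "\<dots> = unfold_word n N m w (int (m + p - r))"
    by (rule arg_cong[where f="unfold_word n N m w"]) (use False N_le_period p N_large in \<open>simp add: of_nat_diff\<close>)
  also have "unfold_word n N m w (int (m + p - r)) = snd (w ! (2 * r - n - p))"
  proof -
    have "m + p - r < m" "\<not> (m + p - r < N - r)" "m + r - n - (m + p - r) = 2 * r - n - p"
      using False N_le_period p n_le_1 N_large by linarith+
    then show ?thesis using unfold_word_nat[of "m + p - r" w] by simp
  qed
  also have "\<dots> = fst (w ! p)"
    using good_word_head_swap[OF lw G, of p "2 * r - n - p"] False n_le_1 by simp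
  finally show ?thesis .
qed

lemma unfold_word_snd:
  assumes lw: "length w = N" and G: "good_word n d w" and p: "p < N"
  shows "unfold_word n N m w (- (int p - int r) - int n) = snd (w ! p)"
proof (cases "p + n \<le> r")
  case True
  have "unfold_word n N m w (- (int p - int r) - int n) = unfold_word n N m w (int (r - p - n))"
    by (rule arg_cong[where f="unfold_word n N m w"]) (use True in linarith)
  also have "\<dots> = fst (w ! (r - p - n + r))"
  proof -
    have "r - p - n < m" "r - p - n < N - r" using N_large N_le_period by linarith+
    then show ?thesis using unfold_word_nat[of "r - p - n" w] by simp
  qed
  also have "r - p - n + r = 2 * r - n - p" using True by linarith
  also have "fst (w ! (2 * r - n - p)) = snd (w ! p)"
    using good_word_head_swap[OF lw G, of p "2 * r - n - p"] True by simp
  finally show ?thesis .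
next
  case False
  define j0 where "j0 = m + r - p - n"
  have "unfold_word n N m w (- (int p - int r) - int n)
      = unfold_word n N m w (- (int p - int r) - int n + int m)"
    by (simp add: unfold_word_periodic)
  also have "\<dots> = unfold_word n N m w (int j0)"
    by (rule arg_cong[where f="unfold_word n N m w"]) (unfold j0_def, use False N_le_period p n_le_1 N_large in linarith)
  finally have eq: "unfold_word n N m w (- (int p - int r) - int n) = unfold_word n N m w (int j0)" .
  have j0m: "j0 < m" unfolding j0_def using False p N_le_period N_large by linarith
  show ?thesis
  proof (cases "j0 < N - r")
    case True
    define P' where "P' = j0 + r"
    have "unfold_word n N m w (int j0) = fst (w ! P')" using unfold_word_nat[OF j0m, of w] True unfolding P'_def by simp
    moreover have "w ! P' = prod.swap (w ! p)"
    proof (rule good_word_tail_swap[OF lw G p])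
      show "P' < N" using True unfolding P'_def by linarith
      show "N - 1 - p \<le> 2 * r" using True N_period n_le_1 d_le_1 N_large unfolding j0_def by linarith
      show "N - 1 - P' \<le> 2 * r" using True N_period n_le_1 d_le_1 N_large p unfolding j0_def P'_def by linarith
      show "N - 1 - p + (N - 1 - P') + 1 = 2 * r + d"
        using True N_period n_le_1 d_le_1 N_large p False unfolding j0_def P'_def by linarith
    qed
    ultimately show ?thesis using eq by simp
  next
    case False2: False
    have "m + r - n - j0 = p" unfolding j0_def using False p N_le_period n_le_1 N_large by linarith
    then have "unfold_word n N m w (int j0) = snd (w ! p)" using unfold_word_nat[OF j0m, of w] False2 by simp
    then show ?thesis using eq by simp
  qed
qed

lemma fold_unfold_word:
  assumes lw: "length w = N" and G: "good_word n d w"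
  shows "fold_word n N (unfold_word n N m w) = w"
proof (rule nth_equalityI)
  show "length (fold_word n N (unfold_word n N m w)) = length w" using lw by simp
  fix p assume "p < length (fold_word n N (unfold_word n N m w))"
  then have p: "p < N" by simp
  show "fold_word n N (unfold_word n N m w) ! p = w ! p"
    using p unfold_word_fst[OF lw G p] unfold_word_snd[OF lw G p] by (simp add: nth_fold_word prod_eq_iff)
qed

lemma unfold_word_in_XG:
  assumes lw: "length w = N" and G: "good_word n d w"
  shows "unfold_word n N m w \<in> XG"
proof -
  have "\<exists>s. (s, s) \<in> (path_rel E src tgt lab (fwd_part w) O path_rel E src tgt lab (bwd_part n d w))\<^sup>+"
    using G unfolding good_word_def by blast
  moreover have "fwd_part w @ bwd_part n d w = block (unfold_word n N m w) 0 m"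
    using fwd_bwd_fold_word[where x="unfold_word n N m w", OF unfold_word_periodic] fold_unfold_word[OF lw G] by simp
  ultimately have "\<exists>s. (s, s) \<in> (path_rel E src tgt lab (block (unfold_word n N m w) 0 m))\<^sup>+"
    by (metis path_rel_append)
  then show ?thesis
    using periodic_in_presented_shift_iff[where x="unfold_word n N m w" and src=src and tgt=tgt
        and lab=lab and c=0, OF finite_edges period_pos unfold_word_periodic]
    by simp
qed

lemma flip_window_unfold_word:
  assumes lw: "length w = N" and G: "good_word n d w" and q: "q + (2 * r + 1) \<le> N"
  shows "unfold_word n N m w (- int q - int n) = \<phi> (unfold_word n N m w) (- int q)"
    and "unfold_word n N m w (int q) = \<phi> (unfold_word n N m w) (int q + int n)"
proof -
  define x where "x = unfold_word n N m w"
  have x: "x \<in> XG" unfolding x_def by (rule unfold_word_in_XG[OF lw G])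
  have "window_ok (take (2 * r + 1) (drop q w))"
    using G q lw unfolding good_word_def all_windows_def by simp
  then have window: "window_ok (take (2 * r + 1) (drop q (fold_word n N x)))"
    unfolding x_def fold_unfold_word[OF lw G] .
  have "x (- int q - int n) = local_rule (block x (int q - int r) (2 * r + 1))"
    using window unfolding window_ok_def window_fold_word[OF q] by simp
  also have "\<dots> = \<phi> x (- int q)" by (rule flip_eq_local_rule[OF x, symmetric])
  finally show "unfold_word n N m w (- int q - int n) = \<phi> (unfold_word n N m w) (- int q)"
    unfolding x_def .
  have "x (int q) = local_rule (block x (- int q - int n - int r) (2 * r + 1))"
    using window unfolding window_ok_def window_fold_word[OF q] by simp
  also have "\<dots> = \<phi> x (- (- int q - int n))" by (rule flip_eq_local_rule[OF x, symmetric])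
  finally show "unfold_word n N m w (int q) = \<phi> (unfold_word n N m w) (int q + int n)"
    unfolding x_def by (simp add: add.commute)
qed

lemma unfold_word_flip:
  assumes lw: "length w = N" and G: "good_word n d w"
  shows "\<phi> (unfold_word n N m w) (j + int n) = unfold_word n N m w j"
proof -
  define x where "x = unfold_word n N m w"
  have x: "x \<in> XG" unfolding x_def by (rule unfold_word_in_XG[OF lw G])
  have per: "x (i + int m) = x i" for i unfolding x_def by (rule unfold_word_periodic)
  have per_flip: "\<phi> x (i + int m) = \<phi> x i" for i by (rule flip_periodic[OF x per])
  have base: "\<phi> x (j0 + int n) = x j0" if j0: "0 \<le> j0" "j0 < int m" for j0
  proof (cases "j0 + int (2 * r + 1) \<le> int N")
    case True
    then have "nat j0 + (2 * r + 1) \<le> N" using j0 by linarith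
    from flip_window_unfold_word(2)[OF lw G this] show ?thesis using j0 by (simp add: x_def)
  next
    case False
    define q where "q = nat (int m - int n - j0)"
    have qi: "int q = int m - int n - j0" unfolding q_def using j0 n_le_1 by linarith
    have "q + (2 * r + 1) \<le> N" using qi False N_period n_le_1 d_le_1 N_large by linarith
    from flip_window_unfold_word(1)[OF lw G this]
    have "x (j0 - int m) = \<phi> x (j0 + int n - int m)" using qi by (simp add: x_def algebra_simps)
    then show ?thesis using per[of "j0 - int m"] per_flip[of "j0 + int n - int m"] by simp
  qed
  have "\<phi> x (j + int n) = \<phi> x (j mod int m + int n)"
    by (metis periodic_mod[of "\<phi> x", OF per_flip] mod_add_left_eq)
  also have "\<dots> = x (j mod int m)" using base period_pos by simp
  also have "\<dots> = x j" by (rule periodic_mod[of x m, OF per, symmetric])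
  finally show ?thesis unfolding x_def .
qed

lemma unfold_fold_word:
  assumes per: "\<And>i. x (i + int m) = x i"
  shows "unfold_word n N m (fold_word n N x) = x"
proof
  fix j
  define j0 where "j0 = nat (j mod int m)"
  have j0m: "j0 < m" unfolding j0_def using period_pos by (simp add: nat_less_iff)
  have xj: "x j = x (int j0)" unfolding j0_def using periodic_mod[of x m j, OF per] period_pos by simp
  have "unfold_word n N m (fold_word n N x) j = unfold_word n N m (fold_word n N x) (int j0)"
    unfolding j0_def using unfold_word_mod[of _ j] period_pos by simp
  also have "\<dots> = x (int j0)"
  proof (cases "j0 < N - r")
    case True
    then show ?thesis using unfold_word_nat[OF j0m] by (simp add: nth_fold_word)
  next
    case False
    define P where "P = m + r - n - j0"
    have PN: "P < N" unfolding P_def using False N_period n_le_1 d_le_1 N_large j0m by linarith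
    have "- (int P - int r) - int n = int j0 - int m" unfolding P_def using j0m n_le_1 by linarith
    then have "snd (fold_word n N x ! P) = x (int j0 - int m)" using PN by (simp add: nth_fold_word)
    also have "\<dots> = x (int j0)" using per[of "int j0 - int m"] by simp
    finally show ?thesis using unfold_word_nat[OF j0m] False unfolding P_def by simp
  qed
  finally show "unfold_word n N m (fold_word n N x) j = x j" using xj by simp
qed

lemma p_count_eq_card_good_word:
  "p_count XG \<phi> m (int n) = card {w. length w = N \<and> good_word n d w}"
proof -
  let ?P = "{x \<in> XG. (shift_map ^^ m) x = x \<and> shift_pow (int n) (\<phi> x) = x}"
  let ?G = "{w. length w = N \<and> good_word n d w}"
  have mem_P_iff: "x \<in> ?P \<longleftrightarrow> x \<in> XG \<and> (\<forall>i. x (i + int m) = x i) \<and> (\<forall>j. \<phi> x (j + int n) = x j)"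
    for x by (auto simp: funpow_shift_map shift_pow_def fun_eq_iff)
  have "bij_betw (fold_word n N) ?P ?G"
  proof (rule bij_betw_byWitness[where f'="unfold_word n N m"])
    show "\<forall>a\<in>?P. unfold_word n N m (fold_word n N a) = a" using unfold_fold_word mem_P_iff by blast
    show "\<forall>a'\<in>?G. fold_word n N (unfold_word n N m a') = a'" using fold_unfold_word by blast
    show "fold_word n N ` ?P \<subseteq> ?G" using good_word_fold_word mem_P_iff by auto
    show "unfold_word n N m ` ?G \<subseteq> ?P"
      using unfold_word_in_XG unfold_word_flip mem_P_iff unfold_word_periodic by auto
  qed
  then show ?thesis unfolding p_count_def by (rule bij_betw_same_card)
qed

end

section \<open>Rationality of the generating function\<close>

lemma linear_recurrent_p_count_period:
  assumes "n \<le> 1" and "d \<le> 1"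
    and "\<And>k. k \<ge> k0 \<Longrightarrow> 2 * (k + C) + n = period k + 4 * r + 1 + d \<and> k + C \<ge> 4 * r + 2"
  shows "linear_recurrent (\<lambda>k. real (p_count XG \<phi> (period k) (int n)))"
proof (rule linear_recurrent_eventually_eq)
  show "linear_recurrent (\<lambda>k. real (card {w. length w = k + C \<and> good_word n d w}))"
    using linear_recurrent_shift[OF linear_recurrent_count_words[OF regular_fun_good_word]] .
next
  fix k assume "k \<ge> k0"
  then show "real (p_count XG \<phi> (period k) (int n)) = real (card {w. length w = k + C \<and> good_word n d w})"
    using p_count_eq_card_good_word assms by simp
qed

lemma linear_recurrent_p_count:
  shows "linear_recurrent (\<lambda>k. real (p_count XG \<phi> (2 * k + 1) 0))"
    and "linear_recurrent (\<lambda>k. real (p_count XG \<phi> (2 * k) 0))"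
    and "linear_recurrent (\<lambda>k. real (p_count XG \<phi> (2 * k) 1))"
  using linear_recurrent_p_count_period[of 0 0 "2 * r + 1" "2 * r + 1" "\<lambda>k. 2 * k + 1"]
    linear_recurrent_p_count_period[of 0 1 "2 * r + 1" "2 * r + 1" "\<lambda>k. 2 * k"]
    linear_recurrent_p_count_period[of 1 0 "2 * r + 2" "2 * r" "\<lambda>k. 2 * k"]
  by simp_all

end

lemma sofic_flip_obtain_local_flip:
  fixes X :: "(int \<Rightarrow> 'a::finite) set"
  assumes "sofic_shift X" and "is_flip X \<phi>"
  obtains E src tgt lab r
  where "X = presented_shift E src tgt lab" and "local_flip E src tgt lab \<phi> r"
proof -
  obtain E src tgt lab where fE: "finite E" and X: "X = presented_shift E src tgt lab"
    using assms(1) unfolding sofic_shift_def presented_shift_def by blast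
  have "compactin full_shift_topology X" using compactin_presented_shift[OF fE] X by simp
  moreover have "continuous_map (subtopology full_shift_topology X) full_shift_topology \<phi>"
    using assms(2) homeomorphic_imp_continuous_map continuous_map_into_fulltopology
    unfolding is_flip_def by blast
  ultimately obtain r where "\<forall>y\<in>X. \<forall>z\<in>X. (\<forall>i. \<bar>i\<bar> \<le> int r \<longrightarrow> y i = z i) \<longrightarrow> \<phi> y 0 = \<phi> z 0"
    using continuous_map_local_rule by blast
  then have "local_flip E src tgt lab \<phi> r"
    using fE assms(2) unfolding local_flip_def is_flip_def X by blast
  with X show thesis by (rule that)
qed

lemma rational_fps_flip_gen_fun:
  assumes "linear_recurrent (\<lambda>k. real (p_count X \<phi> (2 * k + 1) 0))"
    and "linear_recurrent (\<lambda>k. real (p_count X \<phi> (2 * k) 0))"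
    and "linear_recurrent (\<lambda>k. real (p_count X \<phi> (2 * k) 1))"
  shows "rational_fps (flip_gen_fun X \<phi>)"
proof -
  define S :: "nat \<Rightarrow> (nat \<Rightarrow> real) \<Rightarrow> real fps" where
    "S e c = Abs_fps (\<lambda>k. if k \<noteq> 0 \<and> k mod 2 = e then c (k div 2) else 0)" for e c
  have rational_S: "rational_fps (S e c)" if "linear_recurrent c" "e < 2" for e c
    unfolding S_def
    by (rule linear_recurrent_imp_rational_fps,
        rule linear_recurrent_eventually_eq[OF linear_recurrent_spread[OF that], of 1]) auto
  define p where "p m n = real (p_count X \<phi> m n)" for m n
  have "flip_gen_fun X \<phi> =
      S 1 (\<lambda>k. p (2 * k + 1) 0) + S 0 (\<lambda>k. 1 / 2 * p (2 * k) 0) + S 0 (\<lambda>k. 1 / 2 * p (2 * k) 1)"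
  proof (rule fps_ext)
    fix k :: nat
    consider "k = 0" | "odd k" | "even k" "k \<noteq> 0" by blast
    then show "fps_nth (flip_gen_fun X \<phi>) k = fps_nth (S 1 (\<lambda>k. p (2 * k + 1) 0)
        + S 0 (\<lambda>k. 1 / 2 * p (2 * k) 0) + S 0 (\<lambda>k. 1 / 2 * p (2 * k) 1)) k"
    proof cases
      case 2
      then have "2 * (k div 2) + 1 = k" by presburger
      then show ?thesis using 2 by (auto simp: flip_gen_fun_def S_def p_def odd_iff_mod_2_eq_one)
    next
      case 3
      then have "2 * (k div 2) = k" by presburger
      then show ?thesis using 3 by (auto simp: flip_gen_fun_def S_def p_def even_iff_mod_2_eq_zero)
    qed (simp add: flip_gen_fun_def S_def)
  qed
  moreover have "rational_fps (S 1 (\<lambda>k. p (2 * k + 1) 0))"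
    using assms(1) by (intro rational_S) (simp_all add: p_def)
  moreover have "rational_fps (S 0 (\<lambda>k. 1 / 2 * p (2 * k) j))"
    if "linear_recurrent (\<lambda>k. real (p_count X \<phi> (2 * k) j))" for j
    using linear_recurrent_scale[OF that, of "1 / 2"] by (intro rational_S) (simp_all add: p_def)
  ultimately show ?thesis using assms(2,3) by (simp add: rational_fps_add)
qed

theorem mainTheorem2:
  fixes X :: "(int \<Rightarrow> 'a::finite) set"
    and \<phi> :: "(int \<Rightarrow> 'a) \<Rightarrow> (int \<Rightarrow> 'a)"
  assumes "sofic_shift X"
    and "is_flip X \<phi>"
  shows "rational_fps (flip_gen_fun X \<phi>)"
proof -
  obtain E src tgt lab r
    where X: "X = presented_shift E src tgt lab" and flip: "local_flip E src tgt lab \<phi> r"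
    using sofic_flip_obtain_local_flip[OF assms] .
  show ?thesis
    unfolding X using local_flip.linear_recurrent_p_count[OF flip] by (rule rational_fps_flip_gen_fun)
qed

end
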